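(* Let $G=(V,E)$ be a finite graph with maximum degree $\Delta$, let $q\in\mathbb N$ and $\beta\ge 0$. Let $P_{\rm SW}$ and $P_{\rm HB}$ be the transition matrices of the Swendsen--Wang dynamics and the heat-bath dynamics, respectively, for the $q$-state Potts model on $G$ at inverse temperature $\beta$. Then \[ \lambda(P_{\rm SW})\;\ge\; c_{\rm SW}\,\lambda(P_{\rm HB}),\qquad\text{where } c_{\rm SW}=c_{\rm SW}(\Delta,\beta,q):=q^{-1}\bigl(q\,e^{2\beta}\bigr)^{-2\Delta}. \]
   Context: Graphs are finite; parallel edges and loops are allowed; each edge $e$ has a set $\{e^{(1)},e^{(2)}\}$ of one or two endvertices. $\deg_G(v)$ is the number of edges having $v$ as an endvertex, and $\Delta=\max_v\deg_G(v)$. For $A\subseteq E$, $c(A)$ is the number of connected components of the spanning subgraph $(V,A)$. Potts model: $\Omega_{\rm P}=\{1,\dots,q\}^V$, $E(\sigma)=\{e\in E:\sigma(e^{(1)})=\sigma(e^{(2)})\}$, and $\pi(\sigma)=e^{\beta|E(\sigma)|}/Z$ with $Z$ the normalizing constant. Heat-bath dynamics: for $\sigma\in\Omega_{\rm P}$, $v\in V$, $k\in\{1,\dots,q\}$ let $\sigma^{v,k}$ agree with $\sigma$ off $v$ and equal $k$ at $v$, and $\Omega_{\sigma,v}=\{\sigma^{v,l}:l=1,\dots,q\}$. Then $P_{\rm HB}(\sigma,\tau)=\frac1{|V|}\sum_{v\in V}\frac{\pi(\tau)}{\sum_{l=1}^q\pi(\sigma^{v,l})}\mathbf 1(\tau\in\Omega_{\sigma,v})$.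 Swendsen--Wang dynamics: with $p=1-e^{-\beta}$, $P_{\rm SW}(\sigma,\tau)=(1-p)^{|E(\sigma)|}\sum_{A\subseteq E(\sigma)\cap E(\tau)}\bigl(\tfrac{p}{1-p}\bigr)^{|A|}q^{-c(A)}$ (from $\sigma$, keep each edge of $E(\sigma)$ independently with probability $p$ to obtain $A$, then give each connected component of $(V,A)$ an independent uniformly random color). Both chains are ergodic and reversible with respect to $\pi$. For such a transition matrix $P$, the spectral gap is $\lambda(P)=1-\max\{|\xi|:\xi\text{ an eigenvalue of }P,\ \xi\neq1\}$. *)

theory Defs
  imports "HOL-Analysis.Analysis"
begin

text \<open>A finite multigraph: vertex set V, edge set E, and each edge e has a set
  ends e of one or two endvertices (one endvertex = loop).\<close>
definition graph :: "'v set \<Rightarrow> 'e set \<Rightarrow> ('e \<Rightarrow> 'v set) \<Rightarrow> bool" where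
  "graph V E ends \<longleftrightarrow> finite V \<and> finite E \<and>
     (\<forall>e\<in>E. ends e \<subseteq> V \<and> 1 \<le> card (ends e) \<and> card (ends e) \<le> 2)"

definition deg :: "'e set \<Rightarrow> ('e \<Rightarrow> 'v set) \<Rightarrow> 'v \<Rightarrow> nat" where
  "deg E ends v = card {e\<in>E. v \<in> ends e}"

definition max_deg :: "'v set \<Rightarrow> 'e set \<Rightarrow> ('e \<Rightarrow> 'v set) \<Rightarrow> nat" where
  "max_deg V E ends = Max (insert 0 (deg E ends ` V))"

definition adj :: "('e \<Rightarrow> 'v set) \<Rightarrow> 'e set \<Rightarrow> ('v \<times> 'v) set" where
  "adj ends A = {(u, w). \<exists>e\<in>A. u \<in> ends e \<and> w \<in> ends e}"

definition ncomp :: "'v set \<Rightarrow> ('e \<Rightarrow> 'v set) \<Rightarrow> 'e set \<Rightarrow> nat" where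
  "ncomp V ends A = card (V // ((adj ends A)\<^sup>*))"

definition potts_states :: "'v set \<Rightarrow> nat \<Rightarrow> ('v \<Rightarrow> nat) set" where
  "potts_states V q = (V \<rightarrow>\<^sub>E {1..q})"

definition mono_edges :: "'e set \<Rightarrow> ('e \<Rightarrow> 'v set) \<Rightarrow> ('v \<Rightarrow> nat) \<Rightarrow> 'e set" where
  "mono_edges E ends \<sigma> = {e\<in>E. card (\<sigma> ` ends e) = 1}"

definition potts_Z :: "'v set \<Rightarrow> 'e set \<Rightarrow> ('e \<Rightarrow> 'v set) \<Rightarrow> nat \<Rightarrow> real \<Rightarrow> real" where
  "potts_Z V E ends q \<beta> = (\<Sum>\<sigma>\<in>potts_states V q. exp (\<beta> * real (card (mono_edges E ends \<sigma>))))"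

definition potts_pi :: "'v set \<Rightarrow> 'e set \<Rightarrow> ('e \<Rightarrow> 'v set) \<Rightarrow> nat \<Rightarrow> real \<Rightarrow> ('v \<Rightarrow> nat) \<Rightarrow> real" where
  "potts_pi V E ends q \<beta> \<sigma> = exp (\<beta> * real (card (mono_edges E ends \<sigma>))) / potts_Z V E ends q \<beta>"

definition P_HB :: "'v set \<Rightarrow> 'e set \<Rightarrow> ('e \<Rightarrow> 'v set) \<Rightarrow> nat \<Rightarrow> real \<Rightarrow>
    ('v \<Rightarrow> nat) \<Rightarrow> ('v \<Rightarrow> nat) \<Rightarrow> real" where
  "P_HB V E ends q \<beta> \<sigma> \<tau> =
     (1 / real (card V)) *
     (\<Sum>v\<in>V. (if \<tau> \<in> {\<sigma>(v := l) | l. l \<in> {1..q}}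
              then potts_pi V E ends q \<beta> \<tau> /
                   (\<Sum>l\<in>{1..q}. potts_pi V E ends q \<beta> (\<sigma>(v := l)))
              else 0))"

definition P_SW :: "'v set \<Rightarrow> 'e set \<Rightarrow> ('e \<Rightarrow> 'v set) \<Rightarrow> nat \<Rightarrow> real \<Rightarrow>
    ('v \<Rightarrow> nat) \<Rightarrow> ('v \<Rightarrow> nat) \<Rightarrow> real" where
  "P_SW V E ends q \<beta> \<sigma> \<tau> =
     (let p = 1 - exp (- \<beta>) in
      (1 - p) ^ card (mono_edges E ends \<sigma>) *
      (\<Sum>A\<in>Pow (mono_edges E ends \<sigma> \<inter> mono_edges E ends \<tau>).
          (p / (1 - p)) ^ card A * inverse (real q ^ ncomp V ends A)))"

definition is_eigenvalue :: "'s set \<Rightarrow> ('s \<Rightarrow> 's \<Rightarrow> real) \<Rightarrow> complex \<Rightarrow> bool" where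
  "is_eigenvalue \<Omega> P \<xi> \<longleftrightarrow>
     (\<exists>f :: 's \<Rightarrow> complex. (\<exists>\<sigma>\<in>\<Omega>. f \<sigma> \<noteq> 0) \<and>
        (\<forall>\<sigma>\<in>\<Omega>. (\<Sum>\<tau>\<in>\<Omega>. complex_of_real (P \<sigma> \<tau>) * f \<tau>) = \<xi> * f \<sigma>))"

definition spectral_gap :: "'s set \<Rightarrow> ('s \<Rightarrow> 's \<Rightarrow> real) \<Rightarrow> real" where
  "spectral_gap \<Omega> P = 1 - Max (insert 0 {cmod \<xi> | \<xi>. is_eigenvalue \<Omega> P \<xi> \<and> \<xi> \<noteq> 1})"

end

theory Submission
  imports Defs "Jordan_Normal_Form.Char_Poly"
begin

text \<open>Both chains are reversible with respect to the Potts measure, so their spectral gaps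
  are governed by their Dirichlet forms. Through the Edwards--Sokal coupling the Swendsen--Wang
  kernel \<open>\<pi>(\<sigma>) P(\<sigma>, \<tau>)\<close> is a nonnegative combination of the products
  \<open>[A \<subseteq> E(\<sigma>)] [A \<subseteq> E(\<tau>)]\<close>, so it is positive semidefinite; for such a chain the gap is
  controlled by the Dirichlet form alone, and \<open>D_HB \<le> C D_SW\<close> yields
  \<open>gap_HB \<le> C gap_SW\<close>.

  The comparison \<open>D_HB \<le> e^(2 \<beta> \<Delta>) D_SW\<close> comes from discarding the edges at a vertex \<open>v\<close> from
  the Edwards--Sokal weight. The resulting kernel cannot see the colour at \<open>v\<close>, so averaging it
  over all recolourings of \<open>v\<close> bounds the heat-bath variance at \<open>v\<close> by its Dirichlet form. The
  discarded edges cost \<open>e^(\<beta> \<Delta>)\<close>, and comparing heat-bath probabilities with uniform ones costs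
  another \<open>e^(\<beta> \<Delta>)\<close>. Finally \<open>e^(-2 \<beta> \<Delta>) \<ge> c_SW\<close>.\<close>

section \<open>Eigenvalues and spectral gaps\<close>

lemma is_eigenvalue_imp_eigenvalue_mat:
  fixes P :: "'s \<Rightarrow> 's \<Rightarrow> real"
  assumes xs: "set xs = \<Omega>" "distinct xs" and ev: "is_eigenvalue \<Omega> P \<xi>"
  shows "eigenvalue (Matrix.mat (length xs) (length xs) (\<lambda>(i,j). complex_of_real (P (xs!i) (xs!j)))) \<xi>"
proof -
  define n where "n = length xs"
  define A :: "complex Matrix.mat" where "A = Matrix.mat n n (\<lambda>(i,j). complex_of_real (P (xs!i) (xs!j)))"
  have A: "A \<in> carrier_mat n n" unfolding A_def by simp
  have bij: "bij_betw (nth xs) {0..<n} \<Omega>" using bij_betw_nth[OF xs(2), of "{..<n}"] xs n_def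
    by (simp add: atLeast0LessThan)
  obtain f where f0: "\<exists>\<sigma>\<in>\<Omega>. f \<sigma> \<noteq> 0"
    and fe: "\<forall>\<sigma>\<in>\<Omega>. (\<Sum>\<tau>\<in>\<Omega>. complex_of_real (P \<sigma> \<tau>) * f \<tau>) = \<xi> * f \<sigma>"
    using ev unfolding is_eigenvalue_def by blast
  define v where "v = Matrix.vec n (\<lambda>i. f (xs!i))"
  have vc: "v \<in> carrier_vec n" unfolding v_def by simp
  have vnz: "v \<noteq> 0\<^sub>v n"
  proof
    assume "v = 0\<^sub>v n"
    from f0 obtain s where s: "s \<in> \<Omega>" "f s \<noteq> 0" by blast
    then obtain i where i: "i < n" "xs ! i = s" using xs n_def by (metis in_set_conv_nth)
    have "v $ i = 0" using \<open>v = 0\<^sub>v n\<close> i by simp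
    then show False using i s unfolding v_def by simp
  qed
  have "A *\<^sub>v v = \<xi> \<cdot>\<^sub>v v"
  proof (rule eq_vecI)
    fix i assume i: "i < dim_vec (\<xi> \<cdot>\<^sub>v v)"
    then have i': "i < n" unfolding v_def by simp
    have "(A *\<^sub>v v) $ i = (\<Sum>j\<in>{0..<n}. complex_of_real (P (xs!i) (xs!j)) * f (xs!j))"
      using i' unfolding A_def v_def by (simp add: scalar_prod_def)
    also have "\<dots> = (\<Sum>\<tau>\<in>\<Omega>. complex_of_real (P (xs!i) \<tau>) * f \<tau>)"
      using sum.reindex_bij_betw[OF bij, of "\<lambda>\<tau>. complex_of_real (P (xs!i) \<tau>) * f \<tau>"] by simp
    also have "\<dots> = \<xi> * f (xs!i)" using fe i' xs n_def by auto
    finally show "(A *\<^sub>v v) $ i = (\<xi> \<cdot>\<^sub>v v) $ i" using i' unfolding v_def by simp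
  next
    show "dim_vec (A *\<^sub>v v) = dim_vec (\<xi> \<cdot>\<^sub>v v)" using A vc by simp
  qed
  then have "eigenvalue A \<xi>" unfolding eigenvalue_def eigenvector_def using vc vnz A by auto
  then show ?thesis unfolding A_def n_def .
qed

lemma finite_eigenvalues:
  fixes P :: "'s \<Rightarrow> 's \<Rightarrow> real"
  assumes "finite \<Omega>"
  shows "finite {\<xi>. is_eigenvalue \<Omega> P \<xi>}"
proof -
  obtain xs where xs: "set xs = \<Omega>" "distinct xs" using finite_distinct_list[OF assms] by blast
  define A :: "complex Matrix.mat"
    where "A = Matrix.mat (length xs) (length xs) (\<lambda>(i,j). complex_of_real (P (xs!i) (xs!j)))"
  have A: "A \<in> carrier_mat (length xs) (length xs)" unfolding A_def by simp
  have "is_eigenvalue \<Omega> P \<xi> \<Longrightarrow> eigenvalue A \<xi>" for \<xi>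
    unfolding A_def by (rule is_eigenvalue_imp_eigenvalue_mat[OF xs])
  then have roots: "{\<xi>. is_eigenvalue \<Omega> P \<xi>} \<subseteq> {x. poly (char_poly A) x = 0}"
    using eigenvalue_root_char_poly[OF A] by auto
  have "char_poly A \<noteq> 0" using degree_monic_char_poly[OF A] by auto
  then show ?thesis using poly_roots_finite finite_subset[OF roots] by blast
qed

definition nontrivial_spectral_radius :: "'s set \<Rightarrow> ('s \<Rightarrow> 's \<Rightarrow> real) \<Rightarrow> real" where
  "nontrivial_spectral_radius \<Omega> P = Max (insert 0 {cmod \<xi> | \<xi>. is_eigenvalue \<Omega> P \<xi> \<and> \<xi> \<noteq> 1})"

lemma spectral_gap_eq: "spectral_gap \<Omega> P = 1 - nontrivial_spectral_radius \<Omega> P"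
  unfolding spectral_gap_def nontrivial_spectral_radius_def ..

lemma finite_nontrivial_eigenvalue_moduli:
  "finite \<Omega> \<Longrightarrow> finite (insert 0 {cmod \<xi> | \<xi>. is_eigenvalue \<Omega> P \<xi> \<and> \<xi> \<noteq> 1})"
  using finite_eigenvalues[of \<Omega> P] by (auto intro: finite_subset[of _ "cmod ` {\<xi>. is_eigenvalue \<Omega> P \<xi>}"])

lemma nontrivial_spectral_radius_nonneg:
  "finite \<Omega> \<Longrightarrow> 0 \<le> nontrivial_spectral_radius \<Omega> P"
  unfolding nontrivial_spectral_radius_def by (rule Max_ge[OF finite_nontrivial_eigenvalue_moduli]) auto

lemma cmod_le_nontrivial_spectral_radius:
  "finite \<Omega> \<Longrightarrow> is_eigenvalue \<Omega> P \<xi> \<Longrightarrow> \<xi> \<noteq> 1 \<Longrightarrow> cmod \<xi> \<le> nontrivial_spectral_radius \<Omega> P"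
  unfolding nontrivial_spectral_radius_def by (rule Max_ge[OF finite_nontrivial_eigenvalue_moduli]) auto

lemma spectral_gap_le_1: "finite \<Omega> \<Longrightarrow> spectral_gap \<Omega> P \<le> 1"
  using nontrivial_spectral_radius_nonneg by (simp add: spectral_gap_eq)

lemma spectral_gap_geI:
  assumes "finite \<Omega>" and "0 \<le> B"
    and "\<And>\<xi>. is_eigenvalue \<Omega> P \<xi> \<Longrightarrow> \<xi> \<noteq> 1 \<Longrightarrow> cmod \<xi> \<le> B"
  shows "1 - B \<le> spectral_gap \<Omega> P"
proof -
  have "nontrivial_spectral_radius \<Omega> P \<le> B"
    unfolding nontrivial_spectral_radius_def
    using finite_nontrivial_eigenvalue_moduli[OF assms(1)] assms(2,3) by (subst Max_le_iff) auto
  then show ?thesis by (simp add: spectral_gap_eq)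
qed

lemma spectral_gap_eq_1:
  assumes "\<And>\<xi>. is_eigenvalue \<Omega> P \<xi> \<Longrightarrow> \<xi> = 1"
  shows "spectral_gap \<Omega> P = 1"
proof -
  have no_moduli: "{cmod \<xi> | \<xi>. is_eigenvalue \<Omega> P \<xi> \<and> \<xi> \<noteq> 1} = {}" using assms by blast
  show ?thesis unfolding spectral_gap_def no_moduli by simp
qed

section \<open>Reversible chains\<close>

lemma quadratic_nonpos_imp_linear_coeff_nonpos:
  fixes a c :: real
  assumes "\<And>t. 0 < t \<Longrightarrow> a * t + c * t\<^sup>2 \<le> 0"
  shows "a \<le> 0"
proof (rule ccontr)
  assume "\<not> a \<le> 0"
  define t where "t = a / (\<bar>c\<bar> + 1)"
  have t: "0 < t" "t * (\<bar>c\<bar> + 1) = a" using \<open>\<not> a \<le> 0\<close> unfolding t_def by auto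
  have "0 < t * t" using t by simp
  also have "t * t = a * t - \<bar>c\<bar> * t\<^sup>2" by (simp add: t(2)[symmetric] power2_eq_square algebra_simps)
  also have "\<dots> \<le> a * t + c * t\<^sup>2"
    using mult_right_mono[of "- \<bar>c\<bar>" c "t\<^sup>2"] by simp
  finally show False using assms[OF t(1)] by simp
qed

locale reversible_chain =
  fixes \<Omega> :: "'s set" and \<mu> :: "'s \<Rightarrow> real" and P :: "'s \<Rightarrow> 's \<Rightarrow> real"
  assumes finite_\<Omega>: "finite \<Omega>"
    and \<mu>_pos: "s \<in> \<Omega> \<Longrightarrow> 0 < \<mu> s"
    and reversible: "s \<in> \<Omega> \<Longrightarrow> t \<in> \<Omega> \<Longrightarrow> \<mu> s * P s t = \<mu> t * P t s"
    and row_sum: "s \<in> \<Omega> \<Longrightarrow> (\<Sum>t\<in>\<Omega>. P s t) = 1"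
    and P_nonneg: "s \<in> \<Omega> \<Longrightarrow> t \<in> \<Omega> \<Longrightarrow> 0 \<le> P s t"
begin

definition P_op :: "('s \<Rightarrow> real) \<Rightarrow> 's \<Rightarrow> real" where
  "P_op x s = (\<Sum>t\<in>\<Omega>. P s t * x t)"

definition inner_prod :: "('s \<Rightarrow> real) \<Rightarrow> ('s \<Rightarrow> real) \<Rightarrow> real" where
  "inner_prod x y = (\<Sum>s\<in>\<Omega>. \<mu> s * x s * y s)"

definition sqnorm :: "('s \<Rightarrow> real) \<Rightarrow> real" where
  "sqnorm x = inner_prod x x"

definition quad_form :: "('s \<Rightarrow> real) \<Rightarrow> real" where
  "quad_form x = inner_prod x (P_op x)"

definition mean :: "('s \<Rightarrow> real) \<Rightarrow> real" where
  "mean x = (\<Sum>s\<in>\<Omega>. \<mu> s * x s)"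

definition dirichlet :: "('s \<Rightarrow> real) \<Rightarrow> real" where
  "dirichlet x = (\<Sum>s\<in>\<Omega>. \<Sum>t\<in>\<Omega>. \<mu> s * P s t * (x s - x t)\<^sup>2) / 2"

lemma inner_prod_commute: "inner_prod x y = inner_prod y x"
  unfolding inner_prod_def by (simp add: algebra_simps)

lemma inner_prod_cong:
  "(\<And>s. s \<in> \<Omega> \<Longrightarrow> x s = x' s) \<Longrightarrow> (\<And>s. s \<in> \<Omega> \<Longrightarrow> y s = y' s) \<Longrightarrow> inner_prod x y = inner_prod x' y'"
  unfolding inner_prod_def by (intro sum.cong) auto

lemma inner_prod_linear:
  assumes "\<And>s. s \<in> \<Omega> \<Longrightarrow> y s = c * x s + d * z s"
  shows "inner_prod w y = c * inner_prod w x + d * inner_prod w z"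
proof -
  have "inner_prod w y = (\<Sum>s\<in>\<Omega>. c * (\<mu> s * w s * x s) + d * (\<mu> s * w s * z s))"
    unfolding inner_prod_def by (intro sum.cong) (auto simp: assms algebra_simps)
  then show ?thesis unfolding inner_prod_def by (simp add: sum.distrib sum_distrib_left)
qed

lemma P_op_add_scaled: "P_op (\<lambda>s. x s + t * y s) s = P_op x s + t * P_op y s"
  unfolding P_op_def by (simp add: sum.distrib sum_distrib_left algebra_simps)

lemma inner_prod_P_op_commute: "inner_prod x (P_op y) = inner_prod y (P_op x)"
proof -
  have "inner_prod x (P_op y) = (\<Sum>s\<in>\<Omega>. \<Sum>t\<in>\<Omega>. (\<mu> s * P s t) * x s * y t)"
    unfolding inner_prod_def P_op_def by (simp add: sum_distrib_left mult.assoc mult.left_commute)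
  also have "\<dots> = (\<Sum>s\<in>\<Omega>. \<Sum>t\<in>\<Omega>. (\<mu> t * P t s) * x s * y t)"
    by (intro sum.cong refl) (simp add: reversible)
  also have "\<dots> = (\<Sum>t\<in>\<Omega>. \<Sum>s\<in>\<Omega>. (\<mu> t * P t s) * x s * y t)" by (rule sum.swap)
  also have "\<dots> = inner_prod y (P_op x)"
    unfolding inner_prod_def P_op_def by (simp add: sum_distrib_left mult_ac)
  finally show ?thesis .
qed

lemma mean_P_op: "mean (P_op x) = mean x"
proof -
  have "mean (P_op x) = inner_prod (\<lambda>_. 1) (P_op x)" unfolding mean_def inner_prod_def by simp
  also have "\<dots> = inner_prod x (P_op (\<lambda>_. 1))" by (rule inner_prod_P_op_commute)
  also have "\<dots> = mean x" unfolding inner_prod_def mean_def P_op_def by (simp add: row_sum)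
  finally show ?thesis .
qed

lemma mean_scaled: "(\<And>s. s \<in> \<Omega> \<Longrightarrow> y s = c * x s) \<Longrightarrow> mean y = c * mean x"
  unfolding mean_def by (simp add: sum_distrib_left algebra_simps)

lemma sqnorm_nonneg: "0 \<le> sqnorm x"
  unfolding sqnorm_def inner_prod_def
  by (intro sum_nonneg) (simp add: \<mu>_pos less_imp_le mult.assoc)

lemma sqnorm_eq_0D:
  assumes "sqnorm x = 0" and s: "s \<in> \<Omega>"
  shows "x s = 0"
proof -
  have "\<mu> s * x s * x s = 0"
    using assms(1) s unfolding sqnorm_def inner_prod_def
    by (subst (asm) sum_nonneg_eq_0_iff[OF finite_\<Omega>]) (auto simp: \<mu>_pos less_imp_le mult.assoc)
  then show ?thesis using \<mu>_pos[OF s] by simp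
qed

lemma sqnorm_pos: "s \<in> \<Omega> \<Longrightarrow> x s \<noteq> 0 \<Longrightarrow> 0 < sqnorm x"
  using sqnorm_eq_0D sqnorm_nonneg by (metis less_eq_real_def)

lemma quad_form_eq_0: "sqnorm x = 0 \<Longrightarrow> quad_form x = 0"
proof -
  assume "sqnorm x = 0"
  then have "quad_form x = inner_prod (\<lambda>_. 0) (P_op x)"
    unfolding quad_form_def by (intro inner_prod_cong) (auto dest: sqnorm_eq_0D)
  then show ?thesis unfolding inner_prod_def by simp
qed

lemma sqnorm_add_scaled:
  "sqnorm (\<lambda>s. x s + t * y s) = sqnorm x + 2 * t * inner_prod x y + t\<^sup>2 * sqnorm y"
  unfolding sqnorm_def inner_prod_def
  by (simp add: sum.distrib sum_distrib_left algebra_simps power2_eq_square)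

lemma quad_form_add_scaled:
  "quad_form (\<lambda>s. x s + t * y s) = quad_form x + 2 * t * inner_prod y (P_op x) + t\<^sup>2 * quad_form y"
proof -
  have "quad_form (\<lambda>s. x s + t * y s)
      = quad_form x + t * (inner_prod x (P_op y) + inner_prod y (P_op x)) + t\<^sup>2 * quad_form y"
    unfolding quad_form_def P_op_add_scaled unfolding inner_prod_def
    by (simp add: sum.distrib sum_distrib_left algebra_simps power2_eq_square)
  then show ?thesis using inner_prod_P_op_commute[of x y] by simp
qed

lemma quad_form_double_sum: "quad_form x = (\<Sum>s\<in>\<Omega>. \<Sum>t\<in>\<Omega>. \<mu> s * P s t * x s * x t)"
  unfolding quad_form_def inner_prod_def P_op_def by (simp add: sum_distrib_left algebra_simps)

lemma sqnorm_minus_quad_form: "sqnorm x - quad_form x = dirichlet x"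
proof -
  have sq: "(\<Sum>s\<in>\<Omega>. \<Sum>t\<in>\<Omega>. \<mu> s * P s t * (x s)\<^sup>2) = sqnorm x"
    unfolding sqnorm_def inner_prod_def
    by (intro sum.cong refl) (simp add: sum_distrib_left[symmetric] sum_distrib_right[symmetric]
        row_sum power2_eq_square algebra_simps)
  have "(\<Sum>s\<in>\<Omega>. \<Sum>t\<in>\<Omega>. \<mu> s * P s t * (x t)\<^sup>2) = (\<Sum>t\<in>\<Omega>. \<Sum>s\<in>\<Omega>. \<mu> t * P t s * (x t)\<^sup>2)"
    by (subst sum.swap) (intro sum.cong refl, simp add: reversible)
  then have sq': "(\<Sum>s\<in>\<Omega>. \<Sum>t\<in>\<Omega>. \<mu> s * P s t * (x t)\<^sup>2) = sqnorm x" using sq by simp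
  have "(\<Sum>s\<in>\<Omega>. \<Sum>t\<in>\<Omega>. \<mu> s * P s t * (x s - x t)\<^sup>2)
     = (\<Sum>s\<in>\<Omega>. \<Sum>t\<in>\<Omega>. \<mu> s * P s t * (x s)\<^sup>2) + (\<Sum>s\<in>\<Omega>. \<Sum>t\<in>\<Omega>. \<mu> s * P s t * (x t)\<^sup>2)
       - 2 * (\<Sum>s\<in>\<Omega>. \<Sum>t\<in>\<Omega>. \<mu> s * P s t * x s * x t)"
    by (simp add: power2_diff algebra_simps sum.distrib sum_subtractf sum_distrib_left)
  then show ?thesis unfolding dirichlet_def sq sq' quad_form_double_sum by simp
qed

lemma quad_form_nonneg_if_gram:
  assumes "finite I" and c: "\<And>i. i \<in> I \<Longrightarrow> 0 \<le> c i"
    and gram: "\<And>s t. s \<in> \<Omega> \<Longrightarrow> t \<in> \<Omega> \<Longrightarrow> \<mu> s * P s t = (\<Sum>i\<in>I. c i * \<phi> i s * \<phi> i t)"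
  shows "0 \<le> quad_form x"
proof -
  have "quad_form x = (\<Sum>s\<in>\<Omega>. \<Sum>t\<in>\<Omega>. \<Sum>i\<in>I. c i * (\<phi> i s * x s) * (\<phi> i t * x t))"
    unfolding quad_form_double_sum
    by (intro sum.cong refl) (simp add: gram sum_distrib_left sum_distrib_right mult_ac)
  also have "\<dots> = (\<Sum>s\<in>\<Omega>. \<Sum>i\<in>I. \<Sum>t\<in>\<Omega>. c i * (\<phi> i s * x s) * (\<phi> i t * x t))"
    by (intro sum.cong refl sum.swap)
  also have "\<dots> = (\<Sum>i\<in>I. \<Sum>s\<in>\<Omega>. \<Sum>t\<in>\<Omega>. c i * (\<phi> i s * x s) * (\<phi> i t * x t))"
    by (rule sum.swap)
  also have "\<dots> = (\<Sum>i\<in>I. c i * (\<Sum>s\<in>\<Omega>. \<phi> i s * x s)\<^sup>2)"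
    unfolding power2_eq_square sum_product unfolding sum_distrib_left by (simp add: mult.assoc)
  also have "\<dots> \<ge> 0" using c by (intro sum_nonneg) simp
  finally show ?thesis .
qed

lemma dirichlet_nonneg: "0 \<le> dirichlet x"
  unfolding dirichlet_def
  by (intro divide_nonneg_nonneg sum_nonneg mult_nonneg_nonneg) (auto simp: P_nonneg \<mu>_pos less_imp_le)

end

context reversible_chain
begin

lemma sqnorm_scaled: "(\<And>s. s \<in> \<Omega> \<Longrightarrow> y s = c * x s) \<Longrightarrow> sqnorm y = c\<^sup>2 * sqnorm x"
  unfolding sqnorm_def inner_prod_def
  by (simp add: sum_distrib_left power2_eq_square algebra_simps cong: sum.cong)

lemma quad_form_scaled: "(\<And>s. s \<in> \<Omega> \<Longrightarrow> y s = c * x s) \<Longrightarrow> quad_form y = c\<^sup>2 * quad_form x"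
  unfolding quad_form_def inner_prod_def P_op_def
  by (simp add: sum_distrib_left power2_eq_square algebra_simps cong: sum.cong)

lemma mean_add_scaled: "mean (\<lambda>s. x s + t * y s) = mean x + t * mean y"
  unfolding mean_def by (simp add: sum.distrib sum_distrib_left algebra_simps)

lemma eigenvalue_realE:
  assumes ev: "is_eigenvalue \<Omega> P \<xi>" and ne: "\<xi> \<noteq> 1"
  obtains a b where "Im \<xi> = 0" "mean a = 0" "mean b = 0" "0 < sqnorm a + sqnorm b"
    "Re \<xi> * (sqnorm a + sqnorm b) = quad_form a + quad_form b"
proof -
  obtain f where f0: "\<exists>\<sigma>\<in>\<Omega>. f \<sigma> \<noteq> 0"
    and fe: "\<forall>\<sigma>\<in>\<Omega>. (\<Sum>\<tau>\<in>\<Omega>. complex_of_real (P \<sigma> \<tau>) * f \<tau>) = \<xi> * f \<sigma>"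
    using ev unfolding is_eigenvalue_def by blast
  define a where "a = (\<lambda>s. Re (f s))"
  define b where "b = (\<lambda>s. Im (f s))"
  have Pa: "P_op a s = Re \<xi> * a s + (- Im \<xi>) * b s" if "s \<in> \<Omega>" for s
  proof -
    have "Re (\<Sum>\<tau>\<in>\<Omega>. complex_of_real (P s \<tau>) * f \<tau>) = Re (\<xi> * f s)" using fe that by simp
    then show ?thesis unfolding P_op_def a_def b_def by (simp add: Re_sum)
  qed
  have Pb: "P_op b s = Im \<xi> * a s + Re \<xi> * b s" if "s \<in> \<Omega>" for s
  proof -
    have "Im (\<Sum>\<tau>\<in>\<Omega>. complex_of_real (P s \<tau>) * f \<tau>) = Im (\<xi> * f s)" using fe that by simp
    then show ?thesis unfolding P_op_def a_def b_def by (simp add: Im_sum algebra_simps)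
  qed
  have aa: "quad_form a = Re \<xi> * sqnorm a + (- Im \<xi>) * inner_prod a b"
    unfolding quad_form_def sqnorm_def by (rule inner_prod_linear[OF Pa])
  have bb: "quad_form b = Im \<xi> * inner_prod b a + Re \<xi> * sqnorm b"
    unfolding quad_form_def sqnorm_def by (rule inner_prod_linear[OF Pb])
  have ba: "inner_prod b (P_op a) = Re \<xi> * inner_prod b a + (- Im \<xi>) * sqnorm b"
    unfolding sqnorm_def by (rule inner_prod_linear[OF Pa])
  have ab: "inner_prod a (P_op b) = Im \<xi> * sqnorm a + Re \<xi> * inner_prod a b"
    unfolding sqnorm_def by (rule inner_prod_linear[OF Pb])
  have "Im \<xi> * (sqnorm a + sqnorm b) = 0"
    using inner_prod_P_op_commute[of a b] ab ba inner_prod_commute[of a b] by (simp add: algebra_simps)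
  moreover obtain s where s: "s \<in> \<Omega>" "f s \<noteq> 0" using f0 by blast
  then have "a s \<noteq> 0 \<or> b s \<noteq> 0" unfolding a_def b_def by (metis complex_eqI zero_complex.simps)
  then have pos: "0 < sqnorm a + sqnorm b"
    using sqnorm_pos[OF s(1)] sqnorm_nonneg[of a] sqnorm_nonneg[of b] by fastforce
  ultimately have im: "Im \<xi> = 0" by simp
  then have re: "Re \<xi> \<noteq> 1" using ne by (metis complex_eqI one_complex.simps)
  have "mean (P_op a) = Re \<xi> * mean a" "mean (P_op b) = Re \<xi> * mean b"
    by (rule mean_scaled, simp add: Pa Pb im)+
  then have "mean a = 0" "mean b = 0" using mean_P_op[of a] mean_P_op[of b] re
    by (metis mult_cancel_right1)+
  moreover have "Re \<xi> * (sqnorm a + sqnorm b) = quad_form a + quad_form b"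
    using aa bb im by (simp add: algebra_simps)
  ultimately show ?thesis using that im pos by blast
qed

lemma real_eigenvector_is_eigenvalue:
  assumes "\<And>s. s \<in> \<Omega> \<Longrightarrow> P_op f s = M * f s" and "s \<in> \<Omega>" and "f s \<noteq> 0"
  shows "is_eigenvalue \<Omega> P (complex_of_real M)"
  unfolding is_eigenvalue_def
proof (intro exI[of _ "\<lambda>s. complex_of_real (f s)"] conjI ballI)
  show "\<exists>s\<in>\<Omega>. complex_of_real (f s) \<noteq> 0" using assms(2,3) by auto
next
  fix s assume "s \<in> \<Omega>"
  have "(\<Sum>t\<in>\<Omega>. complex_of_real (P s t) * complex_of_real (f t)) = complex_of_real (P_op f s)"
    unfolding P_op_def by simp
  then show "(\<Sum>t\<in>\<Omega>. complex_of_real (P s t) * complex_of_real (f t)) = complex_of_real M * complex_of_real (f s)"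
    using assms(1)[OF \<open>s \<in> \<Omega>\<close>] by simp
qed

lemma sqnorm_1_bounded:
  assumes "sqnorm y = 1" and s: "s \<in> \<Omega>"
  shows "\<bar>y s\<bar> \<le> 1 + (\<Sum>s\<in>\<Omega>. 1 / \<mu> s)"
proof -
  define B where "B = 1 + (\<Sum>s\<in>\<Omega>. 1 / \<mu> s)"
  have "\<mu> s * y s * y s \<le> sqnorm y"
    unfolding sqnorm_def inner_prod_def
    by (rule member_le_sum[OF s _ finite_\<Omega>]) (simp add: \<mu>_pos less_imp_le mult.assoc)
  then have "(y s)\<^sup>2 * \<mu> s \<le> 1" using assms(1) by (simp add: power2_eq_square mult_ac)
  then have "(y s)\<^sup>2 \<le> 1 / \<mu> s" by (rule pos_le_divide_eq[OF \<mu>_pos[OF s], THEN iffD2])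
  also have "1 / \<mu> s \<le> (\<Sum>s\<in>\<Omega>. 1 / \<mu> s)"
    by (rule member_le_sum[OF s _ finite_\<Omega>]) (simp add: \<mu>_pos less_imp_le)
  finally have y2: "(y s)\<^sup>2 \<le> B" unfolding B_def by simp
  have "1 \<le> B" unfolding B_def by (simp add: \<mu>_pos less_imp_le sum_nonneg)
  have "\<bar>y s\<bar> \<le> B"
  proof (cases "\<bar>y s\<bar> \<le> 1")
    case True
    then show ?thesis using \<open>1 \<le> B\<close> by simp
  next
    case False
    then have "\<bar>y s\<bar> * 1 \<le> \<bar>y s\<bar> * \<bar>y s\<bar>" by (intro mult_left_mono) auto
    also have "\<dots> = (y s)\<^sup>2" by (simp add: power2_eq_square abs_mult_self_eq)
    finally show ?thesis using y2 by simp
  qed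
  then show ?thesis unfolding B_def .
qed

lemma normalised:
  assumes "mean x = 0" and "0 < sqnorm x"
  defines "y \<equiv> restrict (\<lambda>s. x s / sqrt (sqnorm x)) \<Omega>"
  shows "mean y = 0" and "sqnorm y = 1" and "quad_form y = quad_form x / sqnorm x"
proof -
  have y: "y s = (1 / sqrt (sqnorm x)) * x s" if "s \<in> \<Omega>" for s using that unfolding y_def by simp
  have c2: "(1 / sqrt (sqnorm x))\<^sup>2 = 1 / sqnorm x" using assms(2) by (simp add: power_divide)
  show "mean y = 0" using mean_scaled[OF y] assms(1) by simp
  show "sqnorm y = 1" using sqnorm_scaled[OF y] c2 assms(2) by simp
  show "quad_form y = quad_form x / sqnorm x" using quad_form_scaled[OF y] c2 by simp
qed

lemma compact_quad_form_unit_sphere: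
  "compact (quad_form ` {x \<in> \<Omega> \<rightarrow>\<^sub>E UNIV. mean x = 0 \<and> sqnorm x = 1})"
proof -
  define B where "B = 1 + (\<Sum>s\<in>\<Omega>. 1 / \<mu> s)"
  define X where "X = product_topology (\<lambda>_. euclideanreal) \<Omega>"
  define S where "S = {x \<in> \<Omega> \<rightarrow>\<^sub>E UNIV. mean x = 0 \<and> sqnorm x = 1}"
  have topX: "topspace X = \<Omega> \<rightarrow>\<^sub>E UNIV" unfolding X_def by simp
  have cont: "continuous_map X euclideanreal mean" "continuous_map X euclideanreal sqnorm"
    "continuous_map X euclideanreal quad_form"
    unfolding mean_def sqnorm_def quad_form_def inner_prod_def P_op_def X_def
    by (intro continuous_map_sum continuous_map_real_mult continuous_map_const[THEN iffD2]
        continuous_map_product_projection; simp add: finite_\<Omega>)+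
  have "compactin X ({x \<in> topspace X. mean x \<in> {0}} \<inter> {x \<in> topspace X. sqnorm x \<in> {1}}
      \<inter> (\<Omega> \<rightarrow>\<^sub>E {-B..B}))"
    using cont by (intro closed_Int_compactin closedin_Int closedin_continuous_map_preimage)
      (auto simp: X_def compactin_PiE)
  moreover have "{x \<in> topspace X. mean x \<in> {0}} \<inter> {x \<in> topspace X. sqnorm x \<in> {1}}
      \<inter> (\<Omega> \<rightarrow>\<^sub>E {-B..B}) = S"
  proof (intro equalityI subsetI)
    fix x assume "x \<in> S"
    then have x: "x \<in> topspace X" "mean x = 0" "sqnorm x = 1" unfolding S_def topX by auto
    have "x s \<in> {-B..B}" if "s \<in> \<Omega>" for s
      using sqnorm_1_bounded[OF x(3) that] unfolding B_def by (simp add: abs_le_iff)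
    then have "x \<in> \<Omega> \<rightarrow>\<^sub>E {-B..B}" using x(1) unfolding topX by (simp add: PiE_iff)
    with x show "x \<in> {x \<in> topspace X. mean x \<in> {0}} \<inter> {x \<in> topspace X. sqnorm x \<in> {1}}
        \<inter> (\<Omega> \<rightarrow>\<^sub>E {-B..B})" by simp
  qed (simp add: S_def topX)
  ultimately have "compactin X S" by simp
  then have "compactin euclideanreal (quad_form ` S)" by (rule image_compactin[OF _ cont(3)])
  then show ?thesis unfolding S_def by simp
qed

lemma rayleigh_maximiser_exists:
  assumes "mean x\<^sub>0 = 0" and "0 < sqnorm x\<^sub>0"
  obtains f where "mean f = 0" and "sqnorm f = 1"
    and "\<And>x. mean x = 0 \<Longrightarrow> quad_form x \<le> quad_form f * sqnorm x"
proof -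
  define S where "S = {x \<in> \<Omega> \<rightarrow>\<^sub>E UNIV. mean x = 0 \<and> sqnorm x = 1}"
  have normalised_in_S: "restrict (\<lambda>s. x s / sqrt (sqnorm x)) \<Omega> \<in> S"
    if "mean x = 0" "0 < sqnorm x" for x
    using normalised[OF that] unfolding S_def by simp
  then have "S \<noteq> {}" using assms by blast
  then obtain f where f: "f \<in> S" and fmax: "\<And>y. y \<in> S \<Longrightarrow> quad_form y \<le> quad_form f"
    using compact_attains_sup[of "quad_form ` S"] compact_quad_form_unit_sphere unfolding S_def by auto
  have "quad_form x \<le> quad_form f * sqnorm x" if "mean x = 0" for x
  proof (cases "sqnorm x = 0")
    case True
    then show ?thesis using quad_form_eq_0 by simp
  next
    case False
    then have "0 < sqnorm x" using sqnorm_nonneg[of x] by simp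
    with normalised[OF that this] fmax[OF normalised_in_S[OF that this]]
    show ?thesis by (simp add: pos_divide_le_eq)
  qed
  moreover have "mean f = 0" "sqnorm f = 1" using f unfolding S_def by auto
  ultimately show ?thesis using that by blast
qed

text \<open>First-order optimality: perturbing the maximiser \<open>f\<close> of the Rayleigh quotient in the
  direction of its own residual \<open>h = P f - (quad_form f) f\<close> shows that \<open>h\<close> vanishes.\<close>
lemma rayleigh_maximiser_eigenvector:
  assumes mean: "mean f = 0" and norm: "sqnorm f = 1"
    and max: "\<And>x. mean x = 0 \<Longrightarrow> quad_form x \<le> quad_form f * sqnorm x"
    and s: "s \<in> \<Omega>"
  shows "P_op f s = quad_form f * f s"
proof -
  define M where "M = quad_form f"
  define h where "h = (\<lambda>s. P_op f s + (- M) * f s)"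
  have "mean h = 0" unfolding h_def mean_add_scaled mean_P_op mean by simp
  have "inner_prod h h = 1 * inner_prod h (P_op f) + (- M) * inner_prod h f"
    by (rule inner_prod_linear) (simp add: h_def)
  then have residual: "inner_prod h (P_op f) - M * inner_prod f h = sqnorm h"
    using inner_prod_commute[of f h] unfolding sqnorm_def by simp
  have "(2 * sqnorm h) * t + (quad_form h - M * sqnorm h) * t\<^sup>2 \<le> 0" for t
  proof -
    have "mean (\<lambda>s. f s + t * h s) = 0" unfolding mean_add_scaled mean \<open>mean h = 0\<close> by simp
    from max[OF this] show ?thesis
      unfolding quad_form_add_scaled sqnorm_add_scaled norm M_def[symmetric] residual[symmetric]
      by (simp add: algebra_simps)
  qed
  then have "2 * sqnorm h \<le> 0" by (rule quadratic_nonpos_imp_linear_coeff_nonpos)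
  then have "sqnorm h = 0" using sqnorm_nonneg[of h] by simp
  then have "h s = 0" using s by (rule sqnorm_eq_0D)
  then show ?thesis unfolding h_def M_def by simp
qed

lemma quad_form_le_nontrivial_spectral_radius:
  assumes ergodic: "\<And>g. mean g = 0 \<Longrightarrow> dirichlet g = 0 \<Longrightarrow> \<forall>s\<in>\<Omega>. g s = 0"
    and "mean g = 0"
  shows "quad_form g \<le> nontrivial_spectral_radius \<Omega> P * sqnorm g"
proof (cases "sqnorm g = 0")
  case True
  then show ?thesis using quad_form_eq_0 by simp
next
  case False
  then have "0 < sqnorm g" using sqnorm_nonneg[of g] by simp
  then obtain f where f: "mean f = 0" "sqnorm f = 1"
    and max: "\<And>x. mean x = 0 \<Longrightarrow> quad_form x \<le> quad_form f * sqnorm x"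
    using rayleigh_maximiser_exists[OF \<open>mean g = 0\<close>] by blast
  have "\<exists>s\<in>\<Omega>. f s \<noteq> 0"
  proof (rule ccontr)
    assume "\<not> (\<exists>s\<in>\<Omega>. f s \<noteq> 0)"
    then have "sqnorm f = 0" unfolding sqnorm_def inner_prod_def by simp
    then show False using f(2) by simp
  qed
  then obtain s where s: "s \<in> \<Omega>" "f s \<noteq> 0" by blast
  have eig: "is_eigenvalue \<Omega> P (complex_of_real (quad_form f))"
    by (rule real_eigenvector_is_eigenvalue[OF rayleigh_maximiser_eigenvector[OF f max] s])
  have "quad_form f \<noteq> 1"
  proof
    assume "quad_form f = 1"
    then have "dirichlet f = 0" using sqnorm_minus_quad_form[of f] f(2) by simp
    then show False using ergodic[OF f(1)] s by blast
  qed
  then have "quad_form f \<le> nontrivial_spectral_radius \<Omega> P"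
    using cmod_le_nontrivial_spectral_radius[OF finite_\<Omega> eig] by simp
  have "quad_form g \<le> quad_form f * sqnorm g" using \<open>mean g = 0\<close> by (rule max)
  also have "\<dots> \<le> nontrivial_spectral_radius \<Omega> P * sqnorm g"
    by (rule mult_right_mono[OF _ sqnorm_nonneg]) fact
  finally show ?thesis .
qed

lemma spectral_gap_poincare:
  assumes "\<And>g. mean g = 0 \<Longrightarrow> dirichlet g = 0 \<Longrightarrow> \<forall>s\<in>\<Omega>. g s = 0"
    and "mean g = 0"
  shows "spectral_gap \<Omega> P * sqnorm g \<le> dirichlet g"
  using quad_form_le_nontrivial_spectral_radius[OF assms] sqnorm_minus_quad_form[of g]
  by (simp add: spectral_gap_eq left_diff_distrib)

lemma spectral_gap_geI_quad_form:
  assumes psd: "\<And>x. 0 \<le> quad_form x" and "\<gamma> \<le> 1"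
    and bound: "\<And>x. mean x = 0 \<Longrightarrow> quad_form x \<le> (1 - \<gamma>) * sqnorm x"
  shows "\<gamma> \<le> spectral_gap \<Omega> P"
proof -
  have moduli: "cmod \<xi> \<le> 1 - \<gamma>" if ev: "is_eigenvalue \<Omega> P \<xi>" "\<xi> \<noteq> 1" for \<xi>
  proof -
    obtain a b where im: "Im \<xi> = 0" and "mean a = 0" "mean b = 0"
      and pos: "0 < sqnorm a + sqnorm b"
      and re: "Re \<xi> * (sqnorm a + sqnorm b) = quad_form a + quad_form b"
      using eigenvalue_realE[OF ev] by blast
    have "Re \<xi> * (sqnorm a + sqnorm b) \<le> (1 - \<gamma>) * (sqnorm a + sqnorm b)"
      using re bound[OF \<open>mean a = 0\<close>] bound[OF \<open>mean b = 0\<close>] by (simp add: distrib_left)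
    then have "Re \<xi> \<le> 1 - \<gamma>" using pos by simp
    moreover have "0 \<le> Re \<xi> * (sqnorm a + sqnorm b)" using re psd[of a] psd[of b] by simp
    then have "0 \<le> Re \<xi>" using pos by (simp add: zero_le_mult_iff)
    moreover have "\<xi> = complex_of_real (Re \<xi>)" using im by (simp add: complex_eq_iff)
    then have "cmod \<xi> = \<bar>Re \<xi>\<bar>" by (metis norm_of_real)
    ultimately show ?thesis by simp
  qed
  have "1 - (1 - \<gamma>) \<le> spectral_gap \<Omega> P"
    by (rule spectral_gap_geI[OF finite_\<Omega>]) (use \<open>\<gamma> \<le> 1\<close> moduli in auto)
  then show ?thesis by simp
qed

end

locale comparable_chains =
  K: reversible_chain \<Omega> \<mu> K + L: reversible_chain \<Omega> \<mu> L
  for \<Omega> :: "'s set" and \<mu> K L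
begin

lemma spectral_gap_comparison:
  assumes psd: "\<And>x. 0 \<le> K.quad_form x"
    and ergodic: "\<And>g. L.mean g = 0 \<Longrightarrow> L.dirichlet g = 0 \<Longrightarrow> \<forall>s\<in>\<Omega>. g s = 0"
    and dirichlet_le: "\<And>x. L.dirichlet x \<le> C * K.dirichlet x" and "1 \<le> C"
  shows "max (spectral_gap \<Omega> L) 0 \<le> C * spectral_gap \<Omega> K"
proof -
  define \<gamma> where "\<gamma> = max (spectral_gap \<Omega> L) 0 / C"
  have "\<gamma> \<le> 1"
    unfolding \<gamma>_def using \<open>1 \<le> C\<close> spectral_gap_le_1[OF L.finite_\<Omega>, of L] by auto
  have "\<gamma> \<le> spectral_gap \<Omega> K"
  proof (rule K.spectral_gap_geI_quad_form[OF psd \<open>\<gamma> \<le> 1\<close>])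
    fix x assume "K.mean x = 0"
    have "max (spectral_gap \<Omega> L) 0 * K.sqnorm x \<le> L.dirichlet x"
      using L.spectral_gap_poincare[OF ergodic \<open>K.mean x = 0\<close>] L.dirichlet_nonneg[of x]
      by (cases "0 \<le> spectral_gap \<Omega> L") auto
    also have "\<dots> \<le> C * K.dirichlet x" by (rule dirichlet_le)
    finally have "\<gamma> * K.sqnorm x \<le> K.dirichlet x"
      using \<open>1 \<le> C\<close> unfolding \<gamma>_def by (simp add: divide_le_eq mult.commute)
    then show "K.quad_form x \<le> (1 - \<gamma>) * K.sqnorm x"
      using K.sqnorm_minus_quad_form[of x] by (simp add: algebra_simps)
  qed
  then show ?thesis unfolding \<gamma>_def using \<open>1 \<le> C\<close> by (simp add: divide_le_eq mult.commute)
qed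

end


section \<open>Colourings constant on components\<close>

lemma bij_betw_PiE_quotient:
  assumes R: "equiv UNIV R" and closed: "R `` V \<subseteq> V"
  shows "bij_betw (\<lambda>h. \<lambda>v\<in>V. h (R `` {v})) (V // R \<rightarrow>\<^sub>E S) {\<sigma> \<in> V \<rightarrow>\<^sub>E S. \<forall>(u, w)\<in>R. \<sigma> u = \<sigma> w}"
proof -
  define T where "T = {\<sigma> \<in> V \<rightarrow>\<^sub>E S. \<forall>(u, w)\<in>R. \<sigma> u = \<sigma> w}"
  define g where "g h = (\<lambda>v\<in>V. h (R `` {v}))" for h :: "'a set \<Rightarrow> 'b"
  define g' where "g' \<sigma> = (\<lambda>c\<in>V // R. the_elem (\<sigma> ` c))" for \<sigma> :: "'a \<Rightarrow> 'b"
  have in_class: "v \<in> R `` {v}" for v using R by (auto simp: equiv_def refl_on_def)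
  have same_class: "R `` {w} = R `` {v}" if "(v, w) \<in> R" for v w
    using equiv_class_eq[OF R that] by simp
  have related_in_V: "u \<in> V \<longleftrightarrow> w \<in> V" if "(u, w) \<in> R" for u w
    using that closed R by (auto simp: equiv_def sym_def)
  have the_elem_class: "the_elem (\<sigma> ` R `` {v}) = \<sigma> v" if "\<sigma> \<in> T" for \<sigma> v
  proof -
    have "\<sigma> ` R `` {v} = {\<sigma> v}" using that in_class[of v] unfolding T_def by auto
    then show ?thesis by simp
  qed
  have "bij_betw g (V // R \<rightarrow>\<^sub>E S) T"
  proof (rule bij_betw_byWitness[where f' = g'])
    show "\<forall>h\<in>V // R \<rightarrow>\<^sub>E S. g' (g h) = h"
    proof (intro ballI ext)
      fix h c assume h: "h \<in> V // R \<rightarrow>\<^sub>E S"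
      show "g' (g h) c = h c"
      proof (cases "c \<in> V // R")
        case True
        then obtain v where v: "v \<in> V" "c = R `` {v}" by (auto elim: quotientE)
        have "g h w = h c" if "w \<in> c" for w
        proof -
          have vw: "(v, w) \<in> R" using that v by simp
          then have "w \<in> V" "R `` {w} = c" using related_in_V[OF vw] same_class[OF vw] v by auto
          then show ?thesis unfolding g_def by simp
        qed
        moreover have "v \<in> c" using in_class[of v] v(2) by simp
        ultimately have "g h ` c = {h c}" by force
        then show ?thesis using True unfolding g'_def by simp
      qed (use h in \<open>simp add: g'_def PiE_def extensional_def\<close>)
    qed
    show "\<forall>\<sigma>\<in>T. g (g' \<sigma>) = \<sigma>"
    proof (intro ballI ext)
      fix \<sigma> v assume "\<sigma> \<in> T"
      show "g (g' \<sigma>) v = \<sigma> v"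
      proof (cases "v \<in> V")
        case True
        then have "R `` {v} \<in> V // R" by (rule quotientI)
        then show ?thesis using True the_elem_class[OF \<open>\<sigma> \<in> T\<close>] unfolding g_def g'_def by simp
      next
        case False
        then show ?thesis using \<open>\<sigma> \<in> T\<close> unfolding T_def g_def by (simp add: PiE_def extensional_def)
      qed
    qed
    show "g ` (V // R \<rightarrow>\<^sub>E S) \<subseteq> T"
    proof clarify
      fix h assume h: "h \<in> V // R \<rightarrow>\<^sub>E S"
      have "g h u = g h w" if "(u, w) \<in> R" for u w
        using related_in_V[OF that] same_class[OF that] unfolding g_def by simp
      moreover have "g h \<in> V \<rightarrow>\<^sub>E S" using h unfolding g_def by (auto intro: quotientI)
      ultimately show "g h \<in> T" unfolding T_def by auto
    qed
    show "g' ` T \<subseteq> V // R \<rightarrow>\<^sub>E S"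
    proof clarify
      fix \<sigma> assume "\<sigma> \<in> T"
      have "g' \<sigma> c \<in> S" if "c \<in> V // R" for c
        using that the_elem_class[OF \<open>\<sigma> \<in> T\<close>] \<open>\<sigma> \<in> T\<close> unfolding g'_def T_def
        by (auto elim!: quotientE)
      then show "g' \<sigma> \<in> V // R \<rightarrow>\<^sub>E S" unfolding g'_def by auto
    qed
  qed
  then show ?thesis unfolding g_def T_def .
qed

lemma card_PiE_constant_on_classes:
  assumes "finite V" and "equiv UNIV R" and "R `` V \<subseteq> V"
  shows "card {\<sigma> \<in> V \<rightarrow>\<^sub>E S. \<forall>(u, w)\<in>R. \<sigma> u = \<sigma> w} = card S ^ card (V // R)"
  using bij_betw_same_card[OF bij_betw_PiE_quotient[OF assms(2,3)], symmetric] assms(1)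
  by (simp add: card_PiE quotient_def prod_constant)

lemma subset_mono_edges_iff:
  assumes "graph V E ends" and "A \<subseteq> E"
  shows "A \<subseteq> mono_edges E ends \<sigma> \<longleftrightarrow> (\<forall>(u, w)\<in>(adj ends A)\<^sup>*. \<sigma> u = \<sigma> w)"
proof
  assume mono: "A \<subseteq> mono_edges E ends \<sigma>"
  have "\<sigma> u = \<sigma> w" if "e \<in> A" "u \<in> ends e" "w \<in> ends e" for e u w
  proof -
    have "card (\<sigma> ` ends e) = 1" using mono that(1) unfolding mono_edges_def by auto
    then show ?thesis using that(2,3) by (metis card_1_singletonE imageI singletonD)
  qed
  then have step: "\<sigma> u = \<sigma> w" if "(u, w) \<in> adj ends A" for u w using that unfolding adj_def by blast
  show "\<forall>(u, w)\<in>(adj ends A)\<^sup>*. \<sigma> u = \<sigma> w"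
  proof clarify
    fix u w assume "(u, w) \<in> (adj ends A)\<^sup>*"
    then show "\<sigma> u = \<sigma> w" by induction (auto dest: step)
  qed
next
  assume const: "\<forall>(u, w)\<in>(adj ends A)\<^sup>*. \<sigma> u = \<sigma> w"
  show "A \<subseteq> mono_edges E ends \<sigma>"
  proof
    fix e assume e: "e \<in> A"
    then obtain u where u: "u \<in> ends e" using assms unfolding graph_def by fastforce
    have "\<sigma> w = \<sigma> u" if "w \<in> ends e" for w
    proof -
      have "(u, w) \<in> (adj ends A)\<^sup>*" using e u that unfolding adj_def by blast
      then show ?thesis using const by auto
    qed
    then have "\<sigma> ` ends e = {\<sigma> u}" using u by blast
    then show "e \<in> mono_edges E ends \<sigma>" using e assms(2) unfolding mono_edges_def by auto
  qed
qed

lemma card_colourings_monochromatic_on: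
  assumes "graph V E ends" and "A \<subseteq> E"
  shows "card {\<sigma> \<in> potts_states V q. A \<subseteq> mono_edges E ends \<sigma>} = q ^ ncomp V ends A"
proof -
  have "sym (adj ends A)" unfolding adj_def sym_def by blast
  then have "equiv UNIV ((adj ends A)\<^sup>*)" by (simp add: equiv_def refl_rtrancl trans_rtrancl sym_rtrancl)
  moreover have "w \<in> V" if "(u, w) \<in> (adj ends A)\<^sup>*" "u \<in> V" for u w
    using that by induction (use assms in \<open>auto simp: adj_def graph_def\<close>)
  then have "(adj ends A)\<^sup>* `` V \<subseteq> V" by blast
  moreover have "finite V" using assms(1) unfolding graph_def by simp
  ultimately show ?thesis
    using card_PiE_constant_on_classes[of V "(adj ends A)\<^sup>*" "{1..q}"]
    unfolding potts_states_def ncomp_def subset_mono_edges_iff[OF assms] by simp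
qed

section \<open>The Swendsen--Wang chain\<close>

locale potts =
  fixes V :: "'v set" and E :: "'e set" and ends :: "'e \<Rightarrow> 'v set" and q :: nat and \<beta> :: real
  assumes graph: "graph V E ends" and \<beta>_nonneg: "0 \<le> \<beta>" and q_pos: "0 < q"
    and V_nonempty: "V \<noteq> {}"
begin

abbreviation "\<Omega> \<equiv> potts_states V q"
abbreviation "\<mu> \<equiv> potts_pi V E ends q \<beta>"
abbreviation "Z \<equiv> potts_Z V E ends q \<beta>"
abbreviation "monochr \<equiv> mono_edges E ends"

text \<open>The Edwards--Sokal coupling: \<open>Z * \<mu> \<sigma> * P_SW \<sigma> \<tau>\<close> is the total weight of the
  random-cluster configurations \<open>A\<close> compatible with both \<open>\<sigma>\<close> and \<open>\<tau>\<close>.\<close>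
definition fk_weight :: "'e set \<Rightarrow> real" where
  "fk_weight A = (exp \<beta> - 1) ^ card A / real q ^ ncomp V ends A"

definition sw_weight :: "('v \<Rightarrow> nat) \<Rightarrow> ('v \<Rightarrow> nat) \<Rightarrow> real" where
  "sw_weight \<sigma> \<tau> = (\<Sum>A\<in>Pow (monochr \<sigma> \<inter> monochr \<tau>). fk_weight A)"

lemma finite_V: "finite V" and finite_E: "finite E"
  using graph unfolding graph_def by auto

lemma finite_\<Omega>: "finite \<Omega>"
  unfolding potts_states_def using finite_V by (simp add: finite_PiE)

lemma const_1_in_\<Omega>: "(\<lambda>v\<in>V. 1) \<in> \<Omega>"
  unfolding potts_states_def using q_pos by auto

lemma monochr_subset: "monochr \<sigma> \<subseteq> E"
  unfolding mono_edges_def by auto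

lemma Z_pos: "0 < Z"
  unfolding potts_Z_def using finite_\<Omega> const_1_in_\<Omega> by (intro sum_pos) auto

lemma \<mu>_eq: "\<mu> \<sigma> = exp (\<beta> * card (monochr \<sigma>)) / Z"
  unfolding potts_pi_def ..

lemma \<mu>_pos: "0 < \<mu> \<sigma>"
  unfolding \<mu>_eq using Z_pos by simp

lemma sum_\<mu>: "(\<Sum>\<sigma>\<in>\<Omega>. \<mu> \<sigma>) = 1"
  unfolding \<mu>_eq potts_Z_def using Z_pos by (simp add: sum_divide_distrib[symmetric] potts_Z_def)

lemma fk_weight_nonneg: "0 \<le> fk_weight A"
  unfolding fk_weight_def using \<beta>_nonneg by simp

lemma sum_fk_weight_colourings:
  assumes "S \<subseteq> E"
  shows "(\<Sum>\<tau>\<in>\<Omega>. \<Sum>A | A \<in> Pow S \<and> A \<subseteq> monochr \<tau>. fk_weight A) = exp (\<beta> * card S)"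
proof -
  have "finite S" using assms finite_E finite_subset by blast
  have "(\<Sum>\<tau>\<in>\<Omega>. \<Sum>A | A \<in> Pow S \<and> A \<subseteq> monochr \<tau>. fk_weight A)
      = (\<Sum>A\<in>Pow S. \<Sum>\<tau> | \<tau> \<in> \<Omega> \<and> A \<subseteq> monochr \<tau>. fk_weight A)"
    by (rule sum.swap_restrict) (use finite_\<Omega> \<open>finite S\<close> in auto)
  also have "\<dots> = (\<Sum>A\<in>Pow S. (exp \<beta> - 1) ^ card A)"
  proof (rule sum.cong[OF refl])
    fix A assume "A \<in> Pow S"
    then have "card {\<tau> \<in> \<Omega>. A \<subseteq> monochr \<tau>} = q ^ ncomp V ends A"
      using card_colourings_monochromatic_on[OF graph] assms by blast
    then show "(\<Sum>\<tau> | \<tau> \<in> \<Omega> \<and> A \<subseteq> monochr \<tau>. fk_weight A) = (exp \<beta> - 1) ^ card A"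
      using q_pos unfolding fk_weight_def by simp
  qed
  also have "\<dots> = exp \<beta> ^ card S"
    using prod_add[OF \<open>finite S\<close>, of "\<lambda>_. exp \<beta> - 1" "\<lambda>_. 1"] by simp
  also have "\<dots> = exp (\<beta> * card S)"
    by (simp add: exp_of_nat_mult[symmetric] mult.commute)
  finally show ?thesis .
qed

lemma \<mu>_P_SW: "\<mu> \<sigma> * P_SW V E ends q \<beta> \<sigma> \<tau> = sw_weight \<sigma> \<tau> / Z"
proof -
  have "(1 - exp (- \<beta>)) / exp (- \<beta>) = exp \<beta> - 1" by (simp add: exp_minus field_simps)
  moreover have "exp (\<beta> * card (monochr \<sigma>)) * exp (- \<beta>) ^ card (monochr \<sigma>) = 1"
    by (simp add: exp_of_nat_mult[symmetric] exp_add[symmetric] mult.commute)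
  ultimately show ?thesis
    unfolding P_SW_def Let_def \<mu>_eq sw_weight_def fk_weight_def by (simp add: divide_inverse)
qed

lemma sw_weight_row_sum: "(\<Sum>\<tau>\<in>\<Omega>. sw_weight \<sigma> \<tau>) = exp (\<beta> * card (monochr \<sigma>))"
proof -
  have "Pow (monochr \<sigma> \<inter> monochr \<tau>) = {A. A \<in> Pow (monochr \<sigma>) \<and> A \<subseteq> monochr \<tau>}" for \<tau> by auto
  then show ?thesis unfolding sw_weight_def using sum_fk_weight_colourings[OF monochr_subset] by simp
qed

lemma sw_weight_eq_sum_indicators:
  "sw_weight \<sigma> \<tau> = (\<Sum>A\<in>Pow E. fk_weight A * of_bool (A \<subseteq> monochr \<sigma>) * of_bool (A \<subseteq> monochr \<tau>))"
proof -
  have "(\<Sum>A\<in>Pow E. fk_weight A * of_bool (A \<subseteq> monochr \<sigma>) * of_bool (A \<subseteq> monochr \<tau>))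
      = (\<Sum>A\<in>Pow E. if A \<subseteq> monochr \<sigma> \<and> A \<subseteq> monochr \<tau> then fk_weight A else 0)"
    by (intro sum.cong) auto
  also have "\<dots> = sum fk_weight {A \<in> Pow E. A \<subseteq> monochr \<sigma> \<and> A \<subseteq> monochr \<tau>}"
    by (rule sum.inter_filter[symmetric]) (use finite_E in simp)
  also have "{A \<in> Pow E. A \<subseteq> monochr \<sigma> \<and> A \<subseteq> monochr \<tau>} = Pow (monochr \<sigma> \<inter> monochr \<tau>)"
    using monochr_subset by auto
  finally show ?thesis unfolding sw_weight_def by simp
qed

end

sublocale potts \<subseteq> SW: reversible_chain "potts_states V q" "potts_pi V E ends q \<beta>" "P_SW V E ends q \<beta>"
proof
  show "finite \<Omega>" by (rule finite_\<Omega>)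
  show "0 < \<mu> s" for s by (rule \<mu>_pos)
  show "\<mu> s * P_SW V E ends q \<beta> s t = \<mu> t * P_SW V E ends q \<beta> t s" for s t
    unfolding \<mu>_P_SW sw_weight_def by (simp add: Int_commute)
  show "0 \<le> P_SW V E ends q \<beta> s t" for s t
  proof -
    have "0 \<le> \<mu> s * P_SW V E ends q \<beta> s t"
      unfolding \<mu>_P_SW sw_weight_def using fk_weight_nonneg Z_pos by (simp add: sum_nonneg)
    then show ?thesis using \<mu>_pos[of s] by (simp add: zero_le_mult_iff)
  qed
  show "(\<Sum>t\<in>\<Omega>. P_SW V E ends q \<beta> s t) = 1" for s
  proof -
    have "\<mu> s * (\<Sum>t\<in>\<Omega>. P_SW V E ends q \<beta> s t) = (\<Sum>t\<in>\<Omega>. sw_weight s t) / Z"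
      by (simp add: sum_distrib_left \<mu>_P_SW sum_divide_distrib)
    also have "\<dots> = \<mu> s" unfolding sw_weight_row_sum \<mu>_eq ..
    finally show ?thesis using \<mu>_pos[of s] by simp
  qed
qed

context potts
begin

lemma SW_quad_form_nonneg: "0 \<le> SW.quad_form x"
proof (rule SW.quad_form_nonneg_if_gram)
  show "finite (Pow E)" using finite_E by simp
  show "0 \<le> fk_weight A / Z" for A using fk_weight_nonneg Z_pos by simp
  show "\<mu> \<sigma> * P_SW V E ends q \<beta> \<sigma> \<tau>
      = (\<Sum>A\<in>Pow E. fk_weight A / Z * of_bool (A \<subseteq> monochr \<sigma>) * of_bool (A \<subseteq> monochr \<tau>))" for \<sigma> \<tau>
    unfolding \<mu>_P_SW sw_weight_eq_sum_indicators by (simp add: sum_divide_distrib)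
qed

end

section \<open>The heat-bath chain\<close>

context potts
begin

definition local_Z :: "('v \<Rightarrow> nat) \<Rightarrow> 'v \<Rightarrow> real" where
  "local_Z \<sigma> v = (\<Sum>l\<in>{1..q}. \<mu> (\<sigma>(v := l)))"

definition recolourings :: "('v \<Rightarrow> nat) \<Rightarrow> 'v \<Rightarrow> ('v \<Rightarrow> nat) set" where
  "recolourings \<sigma> v = {\<sigma>(v := l) | l. l \<in> {1..q}}"

lemma local_Z_pos: "0 < local_Z \<sigma> v"
  unfolding local_Z_def using q_pos \<mu>_pos by (intro sum_pos) auto

lemma local_Z_upd: "local_Z (\<sigma>(v := l)) v = local_Z \<sigma> v"
  unfolding local_Z_def by simp

lemma upd_in_\<Omega>: "\<sigma> \<in> \<Omega> \<Longrightarrow> v \<in> V \<Longrightarrow> l \<in> {1..q} \<Longrightarrow> \<sigma>(v := l) \<in> \<Omega>"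
  unfolding potts_states_def by (auto simp: PiE_iff extensional_def)

lemma recolourings_eq_image: "recolourings \<sigma> v = (\<lambda>l. \<sigma>(v := l)) ` {1..q}"
  unfolding recolourings_def by auto

lemma sum_over_recolourings:
  assumes "\<sigma> \<in> \<Omega>" and "v \<in> V"
  shows "(\<Sum>\<tau>\<in>\<Omega>. if \<tau> \<in> recolourings \<sigma> v then G \<tau> else 0) = (\<Sum>l\<in>{1..q}. G (\<sigma>(v := l)))"
proof -
  have "recolourings \<sigma> v \<subseteq> \<Omega>" unfolding recolourings_eq_image using upd_in_\<Omega>[OF assms] by auto
  then have "(\<Sum>\<tau>\<in>\<Omega>. if \<tau> \<in> recolourings \<sigma> v then G \<tau> else 0) = sum G (recolourings \<sigma> v)"
    using sum.inter_restrict[OF finite_\<Omega>, of G "recolourings \<sigma> v"] by (simp add: Int_absorb1)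
  also have "\<dots> = (\<Sum>l\<in>{1..q}. G (\<sigma>(v := l)))"
    unfolding recolourings_eq_image
    by (rule sum.reindex[unfolded comp_def]) (auto simp: inj_on_def dest: fun_cong[of _ _ v])
  finally show ?thesis .
qed

lemma recolourings_sym:
  assumes "\<sigma> \<in> \<Omega>" and "v \<in> V" and "\<tau> \<in> recolourings \<sigma> v"
  shows "\<sigma> \<in> recolourings \<tau> v" and "local_Z \<tau> v = local_Z \<sigma> v"
proof -
  obtain l where l: "\<tau> = \<sigma>(v := l)" using assms(3) unfolding recolourings_def by blast
  have "\<sigma> v \<in> {1..q}" using assms(1,2) unfolding potts_states_def by auto
  moreover have "\<sigma> = \<tau>(v := \<sigma> v)" using l by simp
  ultimately show "\<sigma> \<in> recolourings \<tau> v" unfolding recolourings_def by blast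
  show "local_Z \<tau> v = local_Z \<sigma> v" unfolding l local_Z_upd ..
qed

lemma P_HB_eq:
  "P_HB V E ends q \<beta> \<sigma> \<tau> = (\<Sum>v\<in>V. if \<tau> \<in> recolourings \<sigma> v then \<mu> \<tau> / local_Z \<sigma> v else 0) / card V"
  unfolding P_HB_def recolourings_def local_Z_def by simp

lemma sum_P_HB:
  assumes "\<sigma> \<in> \<Omega>"
  shows "(\<Sum>\<tau>\<in>\<Omega>. P_HB V E ends q \<beta> \<sigma> \<tau> * h \<tau>)
    = (\<Sum>v\<in>V. \<Sum>l\<in>{1..q}. \<mu> (\<sigma>(v := l)) / local_Z \<sigma> v * h (\<sigma>(v := l))) / card V"
proof -
  have if_times: "(if c then a else 0) * b = (if c then a * b else (0::real))" for c a b by simp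
  have "(\<Sum>\<tau>\<in>\<Omega>. P_HB V E ends q \<beta> \<sigma> \<tau> * h \<tau>)
      = (\<Sum>\<tau>\<in>\<Omega>. \<Sum>v\<in>V. if \<tau> \<in> recolourings \<sigma> v then \<mu> \<tau> / local_Z \<sigma> v * h \<tau> else 0) / card V"
    unfolding P_HB_eq by (simp add: sum_distrib_right sum_divide_distrib if_times)
  also have "\<dots> = (\<Sum>v\<in>V. \<Sum>\<tau>\<in>\<Omega>. if \<tau> \<in> recolourings \<sigma> v then \<mu> \<tau> / local_Z \<sigma> v * h \<tau> else 0) / card V"
    by (subst sum.swap) (rule refl)
  also have "\<dots> = (\<Sum>v\<in>V. \<Sum>l\<in>{1..q}. \<mu> (\<sigma>(v := l)) / local_Z \<sigma> v * h (\<sigma>(v := l))) / card V"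
    by (intro arg_cong[where f = "\<lambda>z. z / real (card V)"] sum.cong refl)
      (simp add: sum_over_recolourings[OF assms])
  finally show ?thesis .
qed

end

sublocale potts \<subseteq> HB: reversible_chain "potts_states V q" "potts_pi V E ends q \<beta>" "P_HB V E ends q \<beta>"
proof
  show "finite \<Omega>" by (rule finite_\<Omega>)
  show "0 < \<mu> s" for s by (rule \<mu>_pos)
  show "\<mu> s * P_HB V E ends q \<beta> s t = \<mu> t * P_HB V E ends q \<beta> t s" if "s \<in> \<Omega>" "t \<in> \<Omega>" for s t
  proof -
    have "\<mu> s * (if t \<in> recolourings s v then \<mu> t / local_Z s v else 0)
        = \<mu> t * (if s \<in> recolourings t v then \<mu> s / local_Z t v else 0)" if "v \<in> V" for v
    proof (cases "t \<in> recolourings s v")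
      case True
      then show ?thesis using recolourings_sym[OF \<open>s \<in> \<Omega>\<close> \<open>v \<in> V\<close> True] by simp
    next
      case False
      then have "s \<notin> recolourings t v" using recolourings_sym(1)[OF \<open>t \<in> \<Omega>\<close> \<open>v \<in> V\<close>] by blast
      then show ?thesis using False by simp
    qed
    then have "(\<Sum>v\<in>V. \<mu> s * (if t \<in> recolourings s v then \<mu> t / local_Z s v else 0))
        = (\<Sum>v\<in>V. \<mu> t * (if s \<in> recolourings t v then \<mu> s / local_Z t v else 0))"
      by (rule sum.cong[OF refl])
    then show ?thesis unfolding P_HB_eq by (simp add: sum_distrib_left)
  qed
  show "0 \<le> P_HB V E ends q \<beta> s t" for s t
    unfolding P_HB_eq using \<mu>_pos local_Z_pos
    by (intro divide_nonneg_nonneg sum_nonneg) (auto simp: less_imp_le)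
  show "(\<Sum>t\<in>\<Omega>. P_HB V E ends q \<beta> s t) = 1" if "s \<in> \<Omega>" for s
  proof -
    have "(\<Sum>l\<in>{1..q}. \<mu> (s(v := l)) / local_Z s v * 1) = 1" for v
      using local_Z_pos[of s v] unfolding local_Z_def by (simp add: sum_divide_distrib[symmetric])
    then show ?thesis using sum_P_HB[OF that, of "\<lambda>_. 1"] finite_V V_nonempty by simp
  qed
qed

context potts
begin

definition local_variance :: "(('v \<Rightarrow> nat) \<Rightarrow> real) \<Rightarrow> ('v \<Rightarrow> nat) \<Rightarrow> 'v \<Rightarrow> real" where
  "local_variance x \<sigma> v = (\<Sum>l\<in>{1..q}. \<mu> (\<sigma>(v := l)) / local_Z \<sigma> v * (x \<sigma> - x (\<sigma>(v := l)))\<^sup>2)"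

lemma local_variance_nonneg: "0 \<le> local_variance x \<sigma> v"
  unfolding local_variance_def using \<mu>_pos local_Z_pos
  by (intro sum_nonneg mult_nonneg_nonneg divide_nonneg_nonneg) (auto simp: less_imp_le)

lemma HB_dirichlet_eq:
  "HB.dirichlet x = (\<Sum>\<sigma>\<in>\<Omega>. \<mu> \<sigma> * (\<Sum>v\<in>V. local_variance x \<sigma> v) / card V) / 2"
proof -
  have "(\<Sum>\<tau>\<in>\<Omega>. \<mu> \<sigma> * P_HB V E ends q \<beta> \<sigma> \<tau> * (x \<sigma> - x \<tau>)\<^sup>2)
      = \<mu> \<sigma> * (\<Sum>v\<in>V. local_variance x \<sigma> v) / card V" if "\<sigma> \<in> \<Omega>" for \<sigma>
  proof -
    have "(\<Sum>\<tau>\<in>\<Omega>. \<mu> \<sigma> * P_HB V E ends q \<beta> \<sigma> \<tau> * (x \<sigma> - x \<tau>)\<^sup>2)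
        = \<mu> \<sigma> * (\<Sum>\<tau>\<in>\<Omega>. P_HB V E ends q \<beta> \<sigma> \<tau> * (x \<sigma> - x \<tau>)\<^sup>2)"
      by (simp add: sum_distrib_left mult.assoc)
    also have "\<dots> = \<mu> \<sigma> * (\<Sum>v\<in>V. local_variance x \<sigma> v) / card V"
      unfolding sum_P_HB[OF that] local_variance_def by simp
    finally show ?thesis .
  qed
  then show ?thesis unfolding HB.dirichlet_def by (intro arg_cong[where f = "\<lambda>z. z / 2"] sum.cong) auto
qed

lemma HB_dirichlet_eq_0_imp_recolouring_invariant:
  assumes "HB.dirichlet x = 0" and \<sigma>: "\<sigma> \<in> \<Omega>" and v: "v \<in> V" and l: "l \<in> {1..q}"
  shows "x (\<sigma>(v := l)) = x \<sigma>"
proof -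
  define F where "F \<sigma>' = \<mu> \<sigma>' * (\<Sum>v\<in>V. local_variance x \<sigma>' v) / card V" for \<sigma>'
  define T where "T l' = \<mu> (\<sigma>(v := l')) / local_Z \<sigma> v * (x \<sigma> - x (\<sigma>(v := l')))\<^sup>2" for l'
  have F_nonneg: "0 \<le> F \<sigma>'" if "\<sigma>' \<in> \<Omega>" for \<sigma>'
    unfolding F_def using \<mu>_pos[of \<sigma>'] local_variance_nonneg
    by (intro divide_nonneg_nonneg mult_nonneg_nonneg sum_nonneg) auto
  have T_nonneg: "0 \<le> T l'" if "l' \<in> {1..q}" for l'
    unfolding T_def using \<mu>_pos[of "\<sigma>(v := l')"] local_Z_pos[of \<sigma> v]
    by (intro mult_nonneg_nonneg divide_nonneg_nonneg) auto
  have "sum F \<Omega> = 0" using assms(1) unfolding HB_dirichlet_eq F_def by simp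
  then have "F \<sigma> = 0" using \<sigma> by (simp add: sum_nonneg_eq_0_iff[OF finite_\<Omega> F_nonneg])
  then have "(\<Sum>v\<in>V. local_variance x \<sigma> v) = 0"
    unfolding F_def using \<mu>_pos[of \<sigma>] finite_V V_nonempty by simp
  then have "sum T {1..q} = 0"
    using v local_variance_nonneg unfolding T_def local_variance_def[symmetric]
    by (simp add: sum_nonneg_eq_0_iff[OF finite_V])
  then have "T l = 0" using sum_nonneg_eq_0_iff[of "{1..q}" T] T_nonneg l by simp
  then show ?thesis unfolding T_def using \<mu>_pos[of "\<sigma>(v := l)"] local_Z_pos[of \<sigma> v] by simp
qed

lemma HB_dirichlet_eq_0_imp_constant:
  assumes "HB.dirichlet x = 0" and "\<sigma> \<in> \<Omega>"
  shows "x \<sigma> = x (\<lambda>v\<in>V. 1)"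
proof -
  define one where "one = (\<lambda>v\<in>V. 1::nat)"
  define D where "D \<sigma> = {v \<in> V. \<sigma> v \<noteq> one v}" for \<sigma>
  have "finite (D \<sigma>)" for \<sigma> unfolding D_def using finite_V by simp
  have "x \<sigma> = x one" if "\<sigma> \<in> \<Omega>" "card (D \<sigma>) = n" for n \<sigma>
    using that
  proof (induction n arbitrary: \<sigma>)
    case 0
    then have "D \<sigma> = {}" using \<open>finite (D \<sigma>)\<close> by simp
    then have "\<sigma> = one" using \<open>\<sigma> \<in> \<Omega>\<close> unfolding D_def one_def potts_states_def
      by (auto simp: PiE_def extensional_def fun_eq_iff)
    then show ?case by simp
  next
    case (Suc n)
    then obtain v where v: "v \<in> D \<sigma>" by (metis card.empty ex_in_conv nat.distinct(1))
    then have "v \<in> V" unfolding D_def by simp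
    have "D (\<sigma>(v := 1)) = D \<sigma> - {v}" unfolding D_def one_def using \<open>v \<in> V\<close> by auto
    then have card: "card (D (\<sigma>(v := 1))) = n" using Suc.prems(2) v \<open>finite (D \<sigma>)\<close> by simp
    have "\<sigma>(v := 1) \<in> \<Omega>" using upd_in_\<Omega>[OF Suc.prems(1) \<open>v \<in> V\<close>] q_pos by simp
    then have "x (\<sigma>(v := 1)) = x one" using card by (rule Suc.IH)
    moreover have "x (\<sigma>(v := 1)) = x \<sigma>"
      using HB_dirichlet_eq_0_imp_recolouring_invariant[OF assms(1) Suc.prems(1) \<open>v \<in> V\<close>] q_pos by simp
    ultimately show ?case by simp
  qed
  then show ?thesis using assms(2) unfolding one_def by blast
qed

lemma HB_ergodic:
  assumes "HB.mean x = 0" and "HB.dirichlet x = 0"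
  shows "\<forall>\<sigma>\<in>\<Omega>. x \<sigma> = 0"
proof -
  have "HB.mean x = (\<Sum>\<sigma>\<in>\<Omega>. \<mu> \<sigma> * x (\<lambda>v\<in>V. 1))"
    unfolding HB.mean_def using HB_dirichlet_eq_0_imp_constant[OF assms(2)] by simp
  then have "x (\<lambda>v\<in>V. 1) = 0" using assms(1) sum_\<mu> by (simp add: sum_distrib_right[symmetric])
  then show ?thesis using HB_dirichlet_eq_0_imp_constant[OF assms(2)] by simp
qed

end

section \<open>Comparison of the Dirichlet forms\<close>

lemma sum_sq_diff_within_le_across:
  fixes a b :: "'i \<Rightarrow> real"
  assumes "finite I"
  shows "(\<Sum>i\<in>I. \<Sum>j\<in>I. (a i - a j)\<^sup>2) + (\<Sum>i\<in>I. \<Sum>j\<in>I. (b i - b j)\<^sup>2)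
    \<le> 2 * (\<Sum>i\<in>I. \<Sum>j\<in>I. (a i - b j)\<^sup>2)"
proof -
  define n where "n = real (card I)"
  have expand: "(\<Sum>i\<in>I. \<Sum>j\<in>I. (c i - d j)\<^sup>2)
      = n * (\<Sum>i\<in>I. (c i)\<^sup>2) + n * (\<Sum>j\<in>I. (d j)\<^sup>2) - 2 * sum c I * sum d I"
    for c d :: "'i \<Rightarrow> real"
  proof -
    have p1: "(\<Sum>i\<in>I. \<Sum>j\<in>I. (c i)\<^sup>2) = n * (\<Sum>i\<in>I. (c i)\<^sup>2)"
      unfolding n_def by (simp add: sum_distrib_left)
    have p2: "(\<Sum>i\<in>I. \<Sum>j\<in>I. (d j)\<^sup>2) = n * (\<Sum>j\<in>I. (d j)\<^sup>2)"
      unfolding n_def by simp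
    have p3: "(\<Sum>i\<in>I. \<Sum>j\<in>I. c i * d j) = sum c I * sum d I" by (rule sum_product[symmetric])
    have "(\<Sum>i\<in>I. \<Sum>j\<in>I. (c i - d j)\<^sup>2) = (\<Sum>i\<in>I. \<Sum>j\<in>I. (c i)\<^sup>2 + (d j)\<^sup>2 - 2 * (c i * d j))"
      by (simp add: power2_diff mult.assoc)
    also have "\<dots> = (\<Sum>i\<in>I. \<Sum>j\<in>I. (c i)\<^sup>2) + (\<Sum>i\<in>I. \<Sum>j\<in>I. (d j)\<^sup>2) - 2 * (\<Sum>i\<in>I. \<Sum>j\<in>I. c i * d j)"
      by (simp only: sum.distrib sum_subtractf sum_distrib_left)
    finally show ?thesis unfolding p1 p2 p3 by simp
  qed
  have "2 * (\<Sum>i\<in>I. \<Sum>j\<in>I. (a i - b j)\<^sup>2)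
      - ((\<Sum>i\<in>I. \<Sum>j\<in>I. (a i - a j)\<^sup>2) + (\<Sum>i\<in>I. \<Sum>j\<in>I. (b i - b j)\<^sup>2)) = 2 * (sum a I - sum b I)\<^sup>2"
    unfolding expand by (simp add: power2_eq_square algebra_simps)
  then show ?thesis by (smt (verit) zero_le_power2)
qed

context potts
begin

abbreviation "\<Delta> \<equiv> max_deg V E ends"

definition edges_at :: "'v \<Rightarrow> 'e set" where
  "edges_at v = {e \<in> E. v \<in> ends e}"

definition monochr_off :: "('v \<Rightarrow> nat) \<Rightarrow> 'v \<Rightarrow> 'e set" where
  "monochr_off \<sigma> v = monochr \<sigma> - edges_at v"

text \<open>The part of the Swendsen--Wang weight that does not see the colour at \<open>v\<close>.\<close>
definition sw_weight_off :: "('v \<Rightarrow> nat) \<Rightarrow> ('v \<Rightarrow> nat) \<Rightarrow> 'v \<Rightarrow> real" where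
  "sw_weight_off \<sigma> \<tau> v = (\<Sum>A\<in>Pow (monochr_off \<sigma> v \<inter> monochr_off \<tau> v). fk_weight A)"

lemma card_edges_at_le: "v \<in> V \<Longrightarrow> card (edges_at v) \<le> \<Delta>"
  unfolding max_deg_def edges_at_def deg_def[symmetric] using finite_V by (intro Max_ge) auto

lemma monochr_off_upd: "monochr_off (\<sigma>(v := l)) v = monochr_off \<sigma> v"
proof -
  have "(\<sigma>(v := l)) ` ends e = \<sigma> ` ends e" if "e \<in> E" "e \<notin> edges_at v" for e
    using that unfolding edges_at_def by (intro image_cong) auto
  then show ?thesis unfolding monochr_off_def mono_edges_def by auto
qed

lemma card_monochr_le: "v \<in> V \<Longrightarrow> card (monochr \<sigma>) \<le> card (monochr_off \<sigma> v) + \<Delta>"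
proof -
  assume "v \<in> V"
  have "card (monochr \<sigma>) \<le> card (monochr_off \<sigma> v \<union> edges_at v)"
    using finite_subset[OF monochr_subset finite_E] finite_E
    by (intro card_mono) (auto simp: monochr_off_def edges_at_def)
  also have "\<dots> \<le> card (monochr_off \<sigma> v) + card (edges_at v)" by (rule card_Un_le)
  finally show ?thesis using card_edges_at_le[OF \<open>v \<in> V\<close>] by simp
qed

lemma sw_weight_off_le: "sw_weight_off \<sigma> \<tau> v \<le> sw_weight \<sigma> \<tau>"
  unfolding sw_weight_off_def sw_weight_def monochr_off_def
  using finite_subset[OF monochr_subset finite_E] fk_weight_nonneg by (intro sum_mono2) auto

lemma sw_weight_off_nonneg: "0 \<le> sw_weight_off \<sigma> \<tau> v"
  unfolding sw_weight_off_def by (intro sum_nonneg fk_weight_nonneg)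

lemma sw_weight_off_sym: "sw_weight_off \<sigma> \<tau> v = sw_weight_off \<tau> \<sigma> v"
  unfolding sw_weight_off_def by (simp add: Int_commute)

lemma sw_weight_off_upd: "sw_weight_off (\<sigma>(v := l)) (\<tau>(v := l')) v = sw_weight_off \<sigma> \<tau> v"
  unfolding sw_weight_off_def monochr_off_upd ..

lemma sum_sw_weight_off_ge:
  assumes "v \<in> V"
  shows "exp (- (\<beta> * \<Delta>)) * (Z * \<mu> \<sigma>) \<le> (\<Sum>\<tau>\<in>\<Omega>. sw_weight_off \<sigma> \<tau> v)"
proof -
  have "Pow (monochr_off \<sigma> v \<inter> monochr_off \<tau> v) = {A. A \<in> Pow (monochr_off \<sigma> v) \<and> A \<subseteq> monochr \<tau>}"
    for \<tau> unfolding monochr_off_def by auto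
  moreover have "monochr_off \<sigma> v \<subseteq> E" using monochr_subset unfolding monochr_off_def by blast
  ultimately have "(\<Sum>\<tau>\<in>\<Omega>. sw_weight_off \<sigma> \<tau> v) = exp (\<beta> * card (monochr_off \<sigma> v))"
    unfolding sw_weight_off_def using sum_fk_weight_colourings by simp
  moreover have "\<beta> * card (monochr \<sigma>) - \<beta> * \<Delta> \<le> \<beta> * card (monochr_off \<sigma> v)"
    using mult_left_mono[OF card_monochr_le[OF assms, of \<sigma>, THEN of_nat_mono] \<beta>_nonneg]
    by (simp add: distrib_left)
  then have "exp (\<beta> * card (monochr \<sigma>) - \<beta> * \<Delta>) \<le> exp (\<beta> * card (monochr_off \<sigma> v))" by simp
  moreover have "exp (\<beta> * card (monochr \<sigma>) - \<beta> * \<Delta>) = exp (- (\<beta> * \<Delta>)) * (Z * \<mu> \<sigma>)"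
    unfolding \<mu>_eq using Z_pos by (simp add: exp_diff exp_minus field_simps)
  ultimately show ?thesis by simp
qed

lemma sum_\<Omega>_recolour:
  fixes h :: "('v \<Rightarrow> nat) \<Rightarrow> real"
  assumes "v \<in> V"
  shows "(\<Sum>\<sigma>\<in>\<Omega>. \<Sum>l\<in>{1..q}. h (\<sigma>(v := l))) = q * (\<Sum>\<sigma>\<in>\<Omega>. h \<sigma>)"
proof -
  have "(\<Sum>\<sigma>\<in>\<Omega>. \<Sum>l\<in>{1..q}. h (\<sigma>(v := l))) = (\<Sum>(\<sigma>, l)\<in>\<Omega> \<times> {1..q}. h (\<sigma>(v := l)))"
    by (rule sum.cartesian_product)
  also have "\<dots> = (\<Sum>(\<sigma>, l)\<in>\<Omega> \<times> {1..q}. h \<sigma>)"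
  proof (rule sum.reindex_bij_witness[where i = "\<lambda>(\<sigma>, l). (\<sigma>(v := l), \<sigma> v)"
        and j = "\<lambda>(\<sigma>, l). (\<sigma>(v := l), \<sigma> v)"])
    fix a assume a: "a \<in> \<Omega> \<times> {1..q}"
    then obtain \<sigma> l where al: "a = (\<sigma>, l)" "\<sigma> \<in> \<Omega>" "l \<in> {1..q}" by blast
    have "\<sigma> v \<in> {1..q}" using al(2) assms unfolding potts_states_def by auto
    then show "(\<lambda>(\<sigma>, l). (\<sigma>(v := l), \<sigma> v)) a \<in> \<Omega> \<times> {1..q}"
      using al upd_in_\<Omega>[OF al(2) assms al(3)] by simp
    then show "(\<lambda>(\<sigma>, l). (\<sigma>(v := l), \<sigma> v)) a \<in> \<Omega> \<times> {1..q}" .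
    show "(\<lambda>(\<sigma>, l). (\<sigma>(v := l), \<sigma> v)) ((\<lambda>(\<sigma>, l). (\<sigma>(v := l), \<sigma> v)) a) = a" using al by simp
    then show "(\<lambda>(\<sigma>, l). (\<sigma>(v := l), \<sigma> v)) ((\<lambda>(\<sigma>, l). (\<sigma>(v := l), \<sigma> v)) a) = a" .
    show "(case (\<lambda>(\<sigma>, l). (\<sigma>(v := l), \<sigma> v)) a of (\<sigma>, l) \<Rightarrow> h \<sigma>) = (case a of (\<sigma>, l) \<Rightarrow> h (\<sigma>(v := l)))"
      using al by simp
  qed
  also have "\<dots> = (\<Sum>\<sigma>\<in>\<Omega>. \<Sum>l\<in>{1..q}. h \<sigma>)" by (rule sum.cartesian_product[symmetric])
  finally show ?thesis by (simp add: sum_distrib_left)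
qed

end

context potts
begin

lemma recolouring_double_sum:
  fixes K d :: "('v \<Rightarrow> nat) \<Rightarrow> ('v \<Rightarrow> nat) \<Rightarrow> real"
  assumes v: "v \<in> V" and K_upd: "\<And>\<sigma> \<tau> l l'. K (\<sigma>(v := l)) (\<tau>(v := l')) = K \<sigma> \<tau>"
  shows "real q * real q * (\<Sum>\<sigma>\<in>\<Omega>. \<Sum>\<tau>\<in>\<Omega>. K \<sigma> \<tau> * d \<sigma> \<tau>)
    = (\<Sum>\<sigma>\<in>\<Omega>. \<Sum>\<tau>\<in>\<Omega>. K \<sigma> \<tau> * (\<Sum>l\<in>{1..q}. \<Sum>l'\<in>{1..q}. d (\<sigma>(v := l)) (\<tau>(v := l'))))"
proof -
  define H where "H \<sigma> = (\<Sum>\<tau>\<in>\<Omega>. K \<sigma> \<tau> * d \<sigma> \<tau>)" for \<sigma>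
  have inner: "q * H (\<sigma>(v := l)) = (\<Sum>\<tau>\<in>\<Omega>. \<Sum>l'\<in>{1..q}. K \<sigma> \<tau> * d (\<sigma>(v := l)) (\<tau>(v := l')))"
    for \<sigma> l
    using sum_\<Omega>_recolour[OF v, of "\<lambda>\<tau>. K (\<sigma>(v := l)) \<tau> * d (\<sigma>(v := l)) \<tau>"]
    unfolding H_def K_upd by simp
  have "real q * real q * (\<Sum>\<sigma>\<in>\<Omega>. \<Sum>\<tau>\<in>\<Omega>. K \<sigma> \<tau> * d \<sigma> \<tau>) = q * (\<Sum>\<sigma>\<in>\<Omega>. \<Sum>l\<in>{1..q}. H (\<sigma>(v := l)))"
    using sum_\<Omega>_recolour[OF v, of H] unfolding H_def by simp
  also have "\<dots> = (\<Sum>\<sigma>\<in>\<Omega>. \<Sum>l\<in>{1..q}. q * H (\<sigma>(v := l)))" by (simp add: sum_distrib_left)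
  also have "\<dots> = (\<Sum>\<sigma>\<in>\<Omega>. \<Sum>l\<in>{1..q}. \<Sum>\<tau>\<in>\<Omega>. \<Sum>l'\<in>{1..q}. K \<sigma> \<tau> * d (\<sigma>(v := l)) (\<tau>(v := l')))"
    unfolding inner ..
  also have "\<dots> = (\<Sum>\<sigma>\<in>\<Omega>. \<Sum>\<tau>\<in>\<Omega>. \<Sum>l\<in>{1..q}. \<Sum>l'\<in>{1..q}. K \<sigma> \<tau> * d (\<sigma>(v := l)) (\<tau>(v := l')))"
    by (intro sum.cong refl sum.swap)
  finally show ?thesis by (simp add: sum_distrib_left)
qed

lemma recolouring_variance_le:
  fixes K :: "('v \<Rightarrow> nat) \<Rightarrow> ('v \<Rightarrow> nat) \<Rightarrow> real" and x :: "('v \<Rightarrow> nat) \<Rightarrow> real"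
  assumes v: "v \<in> V" and K_nonneg: "\<And>\<sigma> \<tau>. 0 \<le> K \<sigma> \<tau>" and K_sym: "\<And>\<sigma> \<tau>. K \<sigma> \<tau> = K \<tau> \<sigma>"
    and K_upd: "\<And>\<sigma> \<tau> l l'. K (\<sigma>(v := l)) (\<tau>(v := l')) = K \<sigma> \<tau>"
  shows "(\<Sum>\<sigma>\<in>\<Omega>. (\<Sum>\<tau>\<in>\<Omega>. K \<sigma> \<tau>) * (\<Sum>l\<in>{1..q}. (x \<sigma> - x (\<sigma>(v := l)))\<^sup>2))
    \<le> q * (\<Sum>\<sigma>\<in>\<Omega>. \<Sum>\<tau>\<in>\<Omega>. K \<sigma> \<tau> * (x \<sigma> - x \<tau>)\<^sup>2)"
proof -
  define d where "d \<sigma> \<tau> = (x \<sigma> - x \<tau>)\<^sup>2" for \<sigma> \<tau>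
  define X where "X \<sigma> = (\<Sum>l\<in>{1..q}. \<Sum>l'\<in>{1..q}. d (\<sigma>(v := l)) (\<sigma>(v := l')))" for \<sigma>
  define W where "W \<sigma> \<tau> = (\<Sum>l\<in>{1..q}. \<Sum>l'\<in>{1..q}. d (\<sigma>(v := l)) (\<tau>(v := l')))" for \<sigma> \<tau>
  have "K \<sigma> \<tau> * (X \<sigma> + X \<tau>) \<le> K \<sigma> \<tau> * (2 * W \<sigma> \<tau>)" for \<sigma> \<tau>
    using sum_sq_diff_within_le_across[of "{1..q}" "\<lambda>l. x (\<sigma>(v := l))" "\<lambda>l. x (\<tau>(v := l))"]
    unfolding X_def W_def d_def by (intro mult_left_mono K_nonneg) auto
  then have "(\<Sum>\<sigma>\<in>\<Omega>. \<Sum>\<tau>\<in>\<Omega>. K \<sigma> \<tau> * (X \<sigma> + X \<tau>)) \<le> (\<Sum>\<sigma>\<in>\<Omega>. \<Sum>\<tau>\<in>\<Omega>. K \<sigma> \<tau> * (2 * W \<sigma> \<tau>))"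
    by (intro sum_mono)
  moreover have "(\<Sum>\<sigma>\<in>\<Omega>. \<Sum>\<tau>\<in>\<Omega>. K \<sigma> \<tau> * (X \<sigma> + X \<tau>))
      = (\<Sum>\<sigma>\<in>\<Omega>. \<Sum>\<tau>\<in>\<Omega>. K \<sigma> \<tau> * X \<sigma>) + (\<Sum>\<sigma>\<in>\<Omega>. \<Sum>\<tau>\<in>\<Omega>. K \<sigma> \<tau> * X \<tau>)"
    by (simp add: distrib_left sum.distrib)
  moreover have "(\<Sum>\<sigma>\<in>\<Omega>. \<Sum>\<tau>\<in>\<Omega>. K \<sigma> \<tau> * (2 * W \<sigma> \<tau>))
      = 2 * (real q * real q * (\<Sum>\<sigma>\<in>\<Omega>. \<Sum>\<tau>\<in>\<Omega>. K \<sigma> \<tau> * d \<sigma> \<tau>))"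
    unfolding recolouring_double_sum[where K = K, OF v K_upd] W_def by (simp add: sum_distrib_left mult_ac)
  moreover have "(\<Sum>\<sigma>\<in>\<Omega>. \<Sum>\<tau>\<in>\<Omega>. K \<sigma> \<tau> * X \<tau>) = (\<Sum>\<sigma>\<in>\<Omega>. \<Sum>\<tau>\<in>\<Omega>. K \<sigma> \<tau> * X \<sigma>)"
    by (subst sum.swap) (simp add: K_sym)
  moreover have "(\<Sum>\<sigma>\<in>\<Omega>. \<Sum>\<tau>\<in>\<Omega>. K \<sigma> \<tau> * X \<sigma>)
      = q * (\<Sum>\<sigma>\<in>\<Omega>. (\<Sum>\<tau>\<in>\<Omega>. K \<sigma> \<tau>) * (\<Sum>l\<in>{1..q}. d \<sigma> (\<sigma>(v := l))))"
  proof -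
    have "K (\<sigma>(v := l)) \<tau> = K \<sigma> \<tau>" for \<sigma> l \<tau> using K_upd[of \<sigma> l \<tau> "\<tau> v"] by simp
    then have row_upd: "(\<Sum>\<tau>\<in>\<Omega>. K (\<sigma>(v := l)) \<tau>) = (\<Sum>\<tau>\<in>\<Omega>. K \<sigma> \<tau>)" for \<sigma> l by simp
    have "(\<Sum>\<sigma>\<in>\<Omega>. \<Sum>\<tau>\<in>\<Omega>. K \<sigma> \<tau> * X \<sigma>) = (\<Sum>\<sigma>\<in>\<Omega>. (\<Sum>\<tau>\<in>\<Omega>. K \<sigma> \<tau>) * X \<sigma>)"
      by (simp add: sum_distrib_right)
    also have "\<dots> = (\<Sum>\<sigma>\<in>\<Omega>. \<Sum>l\<in>{1..q}. (\<Sum>\<tau>\<in>\<Omega>. K (\<sigma>(v := l)) \<tau>) * (\<Sum>l'\<in>{1..q}. d (\<sigma>(v := l)) ((\<sigma>(v := l))(v := l'))))"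
      unfolding row_upd fun_upd_upd X_def by (simp add: sum_distrib_left)
    also have "\<dots> = q * (\<Sum>\<sigma>\<in>\<Omega>. (\<Sum>\<tau>\<in>\<Omega>. K \<sigma> \<tau>) * (\<Sum>l\<in>{1..q}. d \<sigma> (\<sigma>(v := l))))"
      by (rule sum_\<Omega>_recolour[OF v])
    finally show ?thesis .
  qed
  ultimately have "q * (\<Sum>\<sigma>\<in>\<Omega>. (\<Sum>\<tau>\<in>\<Omega>. K \<sigma> \<tau>) * (\<Sum>l\<in>{1..q}. d \<sigma> (\<sigma>(v := l))))
      \<le> q * (q * (\<Sum>\<sigma>\<in>\<Omega>. \<Sum>\<tau>\<in>\<Omega>. K \<sigma> \<tau> * d \<sigma> \<tau>))"
    by (simp add: mult.assoc)
  then show ?thesis unfolding d_def using q_pos by simp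
qed

definition site_variance :: "(('v \<Rightarrow> nat) \<Rightarrow> real) \<Rightarrow> 'v \<Rightarrow> real" where
  "site_variance x v = (\<Sum>\<sigma>\<in>\<Omega>. \<Sum>l\<in>{1..q}. \<mu> \<sigma> * (x \<sigma> - x (\<sigma>(v := l)))\<^sup>2)"

lemma sw_weight_off_le_SW_dirichlet:
  "(\<Sum>\<sigma>\<in>\<Omega>. \<Sum>\<tau>\<in>\<Omega>. sw_weight_off \<sigma> \<tau> v * (x \<sigma> - x \<tau>)\<^sup>2) \<le> 2 * Z * SW.dirichlet x"
proof -
  have "(\<Sum>\<sigma>\<in>\<Omega>. \<Sum>\<tau>\<in>\<Omega>. sw_weight_off \<sigma> \<tau> v * (x \<sigma> - x \<tau>)\<^sup>2)
      \<le> (\<Sum>\<sigma>\<in>\<Omega>. \<Sum>\<tau>\<in>\<Omega>. sw_weight \<sigma> \<tau> * (x \<sigma> - x \<tau>)\<^sup>2)"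
    by (intro sum_mono mult_right_mono sw_weight_off_le) simp
  also have "\<dots> = 2 * Z * SW.dirichlet x"
    unfolding SW.dirichlet_def \<mu>_P_SW using Z_pos by (simp add: sum_divide_distrib[symmetric])
  finally show ?thesis .
qed

lemma site_variance_le_SW_dirichlet:
  assumes "v \<in> V"
  shows "site_variance x v \<le> 2 * q * exp (\<beta> * \<Delta>) * SW.dirichlet x"
proof -
  have "exp (- (\<beta> * \<Delta>)) * Z * site_variance x v
      = (\<Sum>\<sigma>\<in>\<Omega>. exp (- (\<beta> * \<Delta>)) * (Z * \<mu> \<sigma>) * (\<Sum>l\<in>{1..q}. (x \<sigma> - x (\<sigma>(v := l)))\<^sup>2))"
    unfolding site_variance_def by (simp add: sum_distrib_left mult_ac)
  also have "\<dots> \<le> (\<Sum>\<sigma>\<in>\<Omega>. (\<Sum>\<tau>\<in>\<Omega>. sw_weight_off \<sigma> \<tau> v) * (\<Sum>l\<in>{1..q}. (x \<sigma> - x (\<sigma>(v := l)))\<^sup>2))"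
    by (intro sum_mono mult_right_mono sum_sw_weight_off_ge[OF assms] sum_nonneg) simp
  also have "\<dots> \<le> q * (\<Sum>\<sigma>\<in>\<Omega>. \<Sum>\<tau>\<in>\<Omega>. sw_weight_off \<sigma> \<tau> v * (x \<sigma> - x \<tau>)\<^sup>2)"
    by (rule recolouring_variance_le[where K = "\<lambda>\<sigma> \<tau>. sw_weight_off \<sigma> \<tau> v",
          OF assms sw_weight_off_nonneg sw_weight_off_sym sw_weight_off_upd])
  also have "\<dots> \<le> q * (2 * Z * SW.dirichlet x)"
    by (intro mult_left_mono sw_weight_off_le_SW_dirichlet) simp
  finally have "exp (- (\<beta> * \<Delta>)) * Z * site_variance x v \<le> q * (2 * Z * SW.dirichlet x)" .
  then show ?thesis using Z_pos by (simp add: exp_minus field_simps)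
qed

lemma \<mu>_recolour_le:
  assumes "v \<in> V"
  shows "\<mu> (\<sigma>(v := l)) / local_Z \<sigma> v \<le> exp (\<beta> * \<Delta>) / q"
proof -
  have "\<mu> (\<sigma>(v := l)) \<le> exp (\<beta> * \<Delta>) * \<mu> (\<sigma>(v := l'))" for l'
  proof -
    have "card (monochr (\<sigma>(v := l))) \<le> card (monochr_off (\<sigma>(v := l')) v) + \<Delta>"
      using card_monochr_le[OF assms, of "\<sigma>(v := l)"] unfolding monochr_off_upd .
    also have "card (monochr_off (\<sigma>(v := l')) v) \<le> card (monochr (\<sigma>(v := l')))"
      unfolding monochr_off_def using finite_subset[OF monochr_subset finite_E] by (intro card_mono) auto
    finally have "\<beta> * card (monochr (\<sigma>(v := l))) \<le> \<beta> * \<Delta> + \<beta> * card (monochr (\<sigma>(v := l')))"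
      using mult_left_mono[OF of_nat_mono \<beta>_nonneg] by (fastforce simp: distrib_left)
    then show ?thesis unfolding \<mu>_eq using Z_pos by (simp add: exp_add[symmetric] divide_right_mono)
  qed
  then have "(\<Sum>l'\<in>{1..q}. exp (- (\<beta> * \<Delta>)) * \<mu> (\<sigma>(v := l))) \<le> (\<Sum>l'\<in>{1..q}. \<mu> (\<sigma>(v := l')))"
    by (intro sum_mono) (simp add: exp_minus field_simps)
  then have "q * (exp (- (\<beta> * \<Delta>)) * \<mu> (\<sigma>(v := l))) \<le> local_Z \<sigma> v"
    unfolding local_Z_def by simp
  then show ?thesis using local_Z_pos[of \<sigma> v] q_pos by (simp add: exp_minus field_simps)
qed

lemma HB_dirichlet_le_site_variance:
  "HB.dirichlet x \<le> exp (\<beta> * \<Delta>) / (2 * q) * (\<Sum>v\<in>V. site_variance x v) / card V"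
proof -
  have "local_variance x \<sigma> v \<le> exp (\<beta> * \<Delta>) / q * (\<Sum>l\<in>{1..q}. (x \<sigma> - x (\<sigma>(v := l)))\<^sup>2)"
    if "v \<in> V" for \<sigma> v
    unfolding local_variance_def sum_distrib_left
    by (intro sum_mono mult_right_mono \<mu>_recolour_le[OF that]) simp
  then have "HB.dirichlet x
      \<le> (\<Sum>\<sigma>\<in>\<Omega>. \<mu> \<sigma> * (\<Sum>v\<in>V. exp (\<beta> * \<Delta>) / q * (\<Sum>l\<in>{1..q}. (x \<sigma> - x (\<sigma>(v := l)))\<^sup>2)) / card V) / 2"
    unfolding HB_dirichlet_eq
    by (intro divide_right_mono sum_mono mult_left_mono) (auto simp: less_imp_le[OF \<mu>_pos])
  also have "\<dots> = exp (\<beta> * \<Delta>) / (2 * q) * (\<Sum>v\<in>V. site_variance x v) / card V"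
    unfolding site_variance_def
    by (subst (2) sum.swap) (simp add: sum_distrib_left sum_divide_distrib mult_ac)
  finally show ?thesis .
qed

lemma HB_dirichlet_le_SW_dirichlet: "HB.dirichlet x \<le> exp (2 * \<beta> * \<Delta>) * SW.dirichlet x"
proof -
  have "HB.dirichlet x \<le> exp (\<beta> * \<Delta>) / (2 * q) * (\<Sum>v\<in>V. site_variance x v) / card V"
    by (rule HB_dirichlet_le_site_variance)
  also have "\<dots> \<le> exp (\<beta> * \<Delta>) / (2 * q) * (\<Sum>v\<in>V. 2 * q * exp (\<beta> * \<Delta>) * SW.dirichlet x) / card V"
    by (intro divide_right_mono mult_left_mono sum_mono site_variance_le_SW_dirichlet) auto
  also have "\<dots> = exp (2 * \<beta> * \<Delta>) * SW.dirichlet x"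
    using q_pos finite_V V_nonempty by (simp add: exp_add[symmetric] mult_ac)
  finally show ?thesis .
qed

lemma spectral_gap_HB_le_SW:
  "max (spectral_gap \<Omega> (P_HB V E ends q \<beta>)) 0 \<le> exp (2 * \<beta> * \<Delta>) * spectral_gap \<Omega> (P_SW V E ends q \<beta>)"
proof -
  interpret comparable_chains \<Omega> \<mu> "P_SW V E ends q \<beta>" "P_HB V E ends q \<beta>"
    by (intro comparable_chains.intro SW.reversible_chain_axioms HB.reversible_chain_axioms)
  show ?thesis
    using spectral_gap_comparison[OF SW_quad_form_nonneg HB_ergodic HB_dirichlet_le_SW_dirichlet] \<beta>_nonneg
    by simp
qed

end

lemma c_SW_le:
  fixes \<beta> :: real
  assumes "0 \<le> \<beta>"
  shows "inverse (real q) * inverse ((real q * exp (2 * \<beta>)) ^ (2 * D)) \<le> inverse (exp (2 * \<beta> * D))"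
proof (cases "q = 0")
  case False
  have "exp (2 * \<beta> * D) \<le> exp (2 * \<beta>) ^ (2 * D)"
    using assms by (simp add: exp_of_nat_mult[symmetric] mult_ac)
  also have "\<dots> \<le> (real q * exp (2 * \<beta>)) ^ (2 * D)"
    using False by (intro power_mono) auto
  finally have "inverse ((real q * exp (2 * \<beta>)) ^ (2 * D)) \<le> inverse (exp (2 * \<beta> * D))"
    by (rule le_imp_inverse_le) simp
  moreover have "inverse (real q) * inverse ((real q * exp (2 * \<beta>)) ^ (2 * D))
      \<le> inverse ((real q * exp (2 * \<beta>)) ^ (2 * D))"
    using le_imp_inverse_le[of 1 "real q"] False by (intro mult_left_le_one_le) simp_all
  ultimately show ?thesis by linarith
qed simp

lemma spectral_gap_P_SW_degenerate:
  assumes "graph V E ends" and "V = {} \<or> q = 0"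
  shows "spectral_gap (potts_states V q) (P_SW V E ends q \<beta>) = 1"
proof (rule spectral_gap_eq_1)
  fix \<xi> assume ev: "is_eigenvalue (potts_states V q) (P_SW V E ends q \<beta>) \<xi>"
  show "\<xi> = 1"
  proof (cases "V = {}")
    case True
    then have "E = {}" using assms(1) unfolding graph_def by fastforce
    have \<Omega>: "potts_states V q = {\<lambda>_. undefined}" unfolding potts_states_def \<open>V = {}\<close> by simp
    have "P_SW V E ends q \<beta> (\<lambda>_. undefined) (\<lambda>_. undefined) = 1"
      unfolding P_SW_def Let_def \<open>E = {}\<close> \<open>V = {}\<close> mono_edges_def ncomp_def by simp
    then show ?thesis using ev unfolding is_eigenvalue_def \<Omega> by auto
  next
    case False
    then have "potts_states V q = {}" using assms(2) unfolding potts_states_def by auto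
    then show ?thesis using ev unfolding is_eigenvalue_def by simp
  qed
qed

lemma spectral_gap_SW_ge_HB:
  fixes \<beta> :: real
  assumes "graph V E ends" and "0 \<le> \<beta>"
  shows "inverse (exp (2 * \<beta> * max_deg V E ends)) * max (spectral_gap (potts_states V q) (P_HB V E ends q \<beta>)) 0
    \<le> spectral_gap (potts_states V q) (P_SW V E ends q \<beta>)"
proof (cases "V = {} \<or> q = 0")
  case True
  have "finite (potts_states V q)"
    using assms(1) unfolding graph_def potts_states_def by (simp add: finite_PiE)
  then have "spectral_gap (potts_states V q) (P_HB V E ends q \<beta>) \<le> 1" by (rule spectral_gap_le_1)
  moreover have "inverse (exp (2 * \<beta> * max_deg V E ends)) \<le> 1"
    using assms(2) by (simp add: exp_minus[symmetric])
  ultimately show ?thesis using spectral_gap_P_SW_degenerate[OF assms(1) True] by (simp add: mult_le_one)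
next
  case False
  then interpret potts V E ends q \<beta> using assms by unfold_locales auto
  show ?thesis using spectral_gap_HB_le_SW by (simp add: field_simps)
qed

theorem theorem3p1:
  fixes V :: "'v set" and E :: "'e set" and ends :: "'e \<Rightarrow> 'v set"
    and q :: nat and \<beta> :: real
  assumes "graph V E ends" and "\<beta> \<ge> 0"
  shows "spectral_gap (potts_states V q) (P_SW V E ends q \<beta>) \<ge>
    inverse (real q) * inverse ((real q * exp (2 * \<beta>)) ^ (2 * max_deg V E ends))
      * spectral_gap (potts_states V q) (P_HB V E ends q \<beta>)"
proof -
  let ?c = "inverse (real q) * inverse ((real q * exp (2 * \<beta>)) ^ (2 * max_deg V E ends))"
  let ?gap_HB = "spectral_gap (potts_states V q) (P_HB V E ends q \<beta>)"
  have "?c * ?gap_HB \<le> ?c * max ?gap_HB 0" by (rule mult_left_mono) simp_all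
  also have "\<dots> \<le> inverse (exp (2 * \<beta> * max_deg V E ends)) * max ?gap_HB 0"
    by (rule mult_right_mono[OF c_SW_le[OF assms(2)]]) simp
  also have "\<dots> \<le> spectral_gap (potts_states V q) (P_SW V E ends q \<beta>)"
    by (rule spectral_gap_SW_ge_HB[OF assms])
  finally show ?thesis .
qed

end
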